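(* In the setting below, if $A$ is not identically zero on $G$, then $\overline d(\mathcal S(\widehat a))<\infty$.
   Context: Let $\alpha$ be a PV number of degree $d\ge2$ (real algebraic integer, all other Galois conjugates $\alpha_2,\dots,\alpha_d$ of modulus $<1$). Let $\mathbb T=\mathbb R/\mathbb Z$, $\mathbb T^{\mathbb Z}$ the group of maps $\mathbb Z\to\mathbb T$ with product topology, $\theta(y)(j)=y\alpha^j+\mathbb Z$, $\vartheta(s)(j)=\sum_{k=1}^d s_k\alpha_k^j+\mathbb Z$ for $s\in S=\{s\in\mathbb C^d:s_1\in\mathbb R,\ \alpha_j=\overline{\alpha_k}\Rightarrow s_j=\overline{s_k}\}$, and $G=\overline{\vartheta(S)}$; $\theta(\mathbb R)$ is dense in $G$. Let $a:\mathbb N\to\mathbb C$ and $\tau:\mathbb N\to\mathbb Z[\alpha,\alpha^{-1}]$ satisfy $\sum_k|a(k)|e^{\eta|\tau(k)|}<\infty$ for some $\eta>0$ ("exponential decay"). Fix finitely supported $\tau_k:\mathbb Z\to\mathbb Z$ with $\tau(k)=\sum_j\tau_k(j)\alpha^j$. Let $\widehat a(y)=|\alpha|^{-1}\sum_k a(k)e^{-2\pi i\tau(k)y}$ and $A(g)=|\alpha|^{-1}\sum_k a(k)\exp(-2\pi i\sum_j\tau_k(j)g(j))$, $g\in G$. $\mathcal S(f)$ denotes the zero set of $f$ counted with multiplicity, and for such a multiset $Z\subset\mathbb R$, $\overline d(Z)=\limsup_{L\to\infty}\frac{1}{2L}\#(Z\cap(-L,L))$ and $\underline d(Z)=\liminf_{L\to\infty}\frac{1}{2L}\#(Z\cap(-L,L))$.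 *)

theory Defs
  imports "HOL-Analysis.Analysis" "HOL-Computational_Algebra.Polynomial"
begin

definition hderiv :: "nat \<Rightarrow> (real \<Rightarrow> complex) \<Rightarrow> real \<Rightarrow> complex" where
  "hderiv n f = ((\<lambda>g x. vector_derivative g (at x)) ^^ n) f"

definition zero_mult :: "(real \<Rightarrow> complex) \<Rightarrow> real \<Rightarrow> enat" where
  "zero_mult f x = (if \<exists>n. hderiv n f x \<noteq> 0
                    then enat (LEAST n. hderiv n f x \<noteq> 0) else \<infinity>)"

definition zeros_in :: "(real \<Rightarrow> complex) \<Rightarrow> real \<Rightarrow> ennreal" where
  "zeros_in f L = (\<Sum>\<^sub>\<infinity>x\<in>{-L<..<L}. ennreal_of_enat (zero_mult f x))"

definition upper_zero_density :: "(real \<Rightarrow> complex) \<Rightarrow> ennreal" where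
  "upper_zero_density f = Limsup at_top (\<lambda>L::real. zeros_in f L / ennreal (2 * L))"

text \<open>e(z) = exp(2 pi i z): identifies T = R/Z with the unit circle (a homeomorphism).\<close>
definition e1 :: "complex \<Rightarrow> complex" where
  "e1 z = exp (2 * of_real pi * \<i> * z)"

end

theory Submission
  imports Defs "HOL-Computational_Algebra.Polynomial_Factorial"
begin

text \<open>
  Write f_w(y) = \<Sum>k a k w k e(-\<tau> k y), so that ahat = f_1 / \<bar>\<alpha>\<bar>, for weights w in the
  closure of the orbit {(e(-\<tau> k u))_k : u \<in> \<real>}.  Exponential decay of the coefficients gives
  Cauchy-type bounds \<bar>f_w^(n)\<bar> \<le> C n! r^n.  By iterated Rolle (Hermite interpolation), such a
  function has at most 2C/m zeros, counted with multiplicity, in any window of length h \<le> 1/(2r) in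
  which it reaches modulus m; so it suffices that \<bar>ahat\<bar> reaches a fixed m > 0 in every window.

  The same bounds give an identity theorem, so no f_w vanishes on a whole interval (0,h): otherwise
  f_w \<equiv> 0, and twisting by cnj w, which also lies in the orbit closure, would give f_1 \<equiv> 0.
  Compactness of the orbit closure turns this into a uniform m.

  Finally f_1 \<noteq> 0 because A does not vanish on G.  An integral relation among powers of \<alpha> holds
  for all conjugates and hence on G, so the weight of a k in A g depends only on the frequency
  \<tau> k, and A g is a weighted sum of the coefficient sums over the frequencies \<tau> k = l.  These
  sums vanish when f_1 \<equiv> 0, as seen by averaging f_1 e(l y) over arithmetic progressions.
\<close>

definition derivative_chain :: "(nat \<Rightarrow> real \<Rightarrow> 'a::real_normed_vector) \<Rightarrow> bool" where
  "derivative_chain F \<longleftrightarrow> (\<forall>n x. (F n has_vector_derivative F (Suc n) x) (at x))"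

lemma derivative_chainD: "derivative_chain F \<Longrightarrow> (F n has_vector_derivative F (Suc n) x) (at x)"
  unfolding derivative_chain_def by blast

lemma derivative_chain_real_iff:
  "derivative_chain g \<longleftrightarrow> (\<forall>n x. (g n has_real_derivative g (Suc n) x) (at x))"
  unfolding derivative_chain_def has_real_derivative_iff_has_vector_derivative ..

lemma derivative_chain_shift: "derivative_chain F \<Longrightarrow> derivative_chain (\<lambda>n. F (k + n))"
  unfolding derivative_chain_def[of "\<lambda>n. F (k + n)"] by (simp add: derivative_chainD)

lemma derivative_chain_bounded_linear:
  assumes "bounded_linear L" "derivative_chain F"
  shows "derivative_chain (\<lambda>n x. L (F n x))"
  using bounded_linear.has_vector_derivative[OF assms(1)] assms(2)
  unfolding derivative_chain_def by blast

lemma hderiv_derivative_chain: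
  assumes "derivative_chain F"
  shows "hderiv n (F 0) = F n"
proof (induction n)
  case 0 then show ?case by (simp add: hderiv_def)
next
  case (Suc n)
  have "hderiv (Suc n) (F 0) = (\<lambda>x. vector_derivative (hderiv n (F 0)) (at x))"
    by (simp add: hderiv_def)
  then show ?case
    using Suc vector_derivative_at[OF derivative_chainD[OF assms]] by auto
qed

lemma zero_mult_derivative_chain:
  assumes "derivative_chain F" "F n x \<noteq> 0"
  shows "zero_mult (F 0) x = enat (LEAST n. F n x \<noteq> 0)"
  using assms unfolding zero_mult_def hderiv_derivative_chain[OF assms(1)] by auto

definition factorially_bounded :: "(nat \<Rightarrow> real \<Rightarrow> 'a::real_normed_vector) \<Rightarrow> real \<Rightarrow> real \<Rightarrow> bool" where
  "factorially_bounded F C r \<longleftrightarrow> (\<forall>n x. norm (F n x) \<le> C * fact n * r ^ n)"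

lemma factorially_boundedD: "factorially_bounded F C r \<Longrightarrow> norm (F n x) \<le> C * fact n * r ^ n"
  unfolding factorially_bounded_def by blast

lemma factorially_bounded_nonneg: "factorially_bounded F C r \<Longrightarrow> 0 \<le> C"
  using factorially_boundedD[of F C r 0 0] by (simp add: order_trans[OF norm_ge_zero])

section \<open>Rolle's theorem with multiplicities\<close>

lemma derivative_chain_rolle:
  fixes g :: "nat \<Rightarrow> real \<Rightarrow> real"
  assumes chain: "derivative_chain g" and "c < b" "g 0 c = 0" "g 0 b = 0"
  shows "\<exists>\<xi>. c < \<xi> \<and> \<xi> < b \<and> g 1 \<xi> = 0"
proof -
  have ch: "(g n has_real_derivative g (Suc n) x) (at x)" for n x
    using chain by (simp add: derivative_chain_real_iff)
  have "continuous_on {c..b} (g 0)"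
    by (meson DERIV_isCont ch continuous_at_imp_continuous_on)
  then obtain \<xi> where "c < \<xi>" "\<xi> < b" "(g 0 has_real_derivative 0) (at \<xi>)"
    using Rolle[OF \<open>c < b\<close>, of "g 0"] assms(3,4) by (metis ch real_differentiable_def)
  moreover from this have "g 1 \<xi> = 0" using DERIV_unique[OF ch[of 0 \<xi>]] by simp
  ultimately show ?thesis by blast
qed

text \<open>Adding a zero b to the right of all others: b stays a zero of g 1 of multiplicity m b - 1,
  and Rolle between Max A and b yields one new zero of g 1.\<close>

lemma rolle_multiplicities_pos:
  fixes g :: "nat \<Rightarrow> real \<Rightarrow> real" and m :: "real \<Rightarrow> nat"
  assumes chain: "derivative_chain g" and "finite Z"
    and "\<forall>z\<in>Z. 0 < m z \<and> (\<forall>j<m z. g j z = 0)"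
  shows "\<exists>Z' m'. finite Z' \<and> (\<forall>z\<in>Z'. \<exists>z1\<in>Z. \<exists>z2\<in>Z. z1 \<le> z \<and> z \<le> z2) \<and>
           (\<forall>z\<in>Z'. \<forall>j<m' z. g (Suc j) z = 0) \<and> sum m Z \<le> sum m' Z' + 1"
  using assms(2,3)
proof (induction Z rule: finite_linorder_max_induct)
  case empty
  show ?case by (rule exI[of _ "{}"]) auto
next
  case (insert b A)
  have mb: "0 < m b" "\<And>j. j < m b \<Longrightarrow> g j b = 0" using insert.prems by auto
  show ?case
  proof (cases "A = {}")
    case True
    show ?thesis
      by (rule exI[of _ "{b}"], rule exI[of _ "\<lambda>z. m b - 1"]) (use True mb in auto)
  next
    case False
    from insert.IH insert.prems obtain A' m' where
      A': "finite A'" "\<forall>z\<in>A'. \<exists>z1\<in>A. \<exists>z2\<in>A. z1 \<le> z \<and> z \<le> z2"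
          "\<forall>z\<in>A'. \<forall>j<m' z. g (Suc j) z = 0" "sum m A \<le> sum m' A' + 1"
      by auto
    define c where "c = Max A"
    have cA: "c \<in> A" and cb: "c < b" using False insert.hyps c_def by auto
    have "g 0 c = 0" "g 0 b = 0" using insert.prems cA mb by auto
    then obtain \<xi> where xi: "c < \<xi>" "\<xi> < b" and g1: "g 1 \<xi> = 0"
      using derivative_chain_rolle[OF chain cb] by blast
    have "\<forall>z\<in>A'. z \<le> c"
      using A'(2) insert.hyps(1) c_def by (meson Max_ge order.trans)
    then have new: "b \<notin> A'" "\<xi> \<notin> A'" using cb xi by force+
    define m'' where "m'' = m'(b := m b - 1, \<xi> := 1)"
    have "sum m'' A' = sum m' A'" using new by (intro sum.cong) (auto simp: m''_def)
    then have sum'': "sum m'' (insert b (insert \<xi> A')) = (m b - 1) + 1 + sum m' A'"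
      using new A'(1) xi by (simp add: m''_def)
    show ?thesis
    proof (intro exI conjI)
      show "finite (insert b (insert \<xi> A'))" using A'(1) by auto
      show "\<forall>z\<in>insert b (insert \<xi> A'). \<exists>z1\<in>insert b A. \<exists>z2\<in>insert b A. z1 \<le> z \<and> z \<le> z2"
        using A'(2) cA xi cb by (auto intro: order.trans) (meson less_imp_le)+
      show "\<forall>z\<in>insert b (insert \<xi> A'). \<forall>j<m'' z. g (Suc j) z = 0"
        using A'(3) mb g1 new xi by (auto simp: m''_def)
      show "sum m (insert b A) \<le> sum m'' (insert b (insert \<xi> A')) + 1"
        using sum'' A'(4) insert.hyps mb by auto
    qed
  qed
qed

lemma rolle_multiplicities:
  fixes g :: "nat \<Rightarrow> real \<Rightarrow> real" and m :: "real \<Rightarrow> nat"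
  assumes chain: "derivative_chain g" and fin: "finite Z" and sub: "Z \<subseteq> {a..b}"
    and zeros: "\<And>z j. z \<in> Z \<Longrightarrow> j < m z \<Longrightarrow> g j z = 0"
  shows "\<exists>Z' m'. finite Z' \<and> Z' \<subseteq> {a..b} \<and>
           (\<forall>z\<in>Z'. \<forall>j<m' z. g (Suc j) z = 0) \<and> sum m Z \<le> sum m' Z' + 1"
proof -
  define Z1 where "Z1 = {z\<in>Z. 0 < m z}"
  have "finite Z1" "\<forall>z\<in>Z1. 0 < m z \<and> (\<forall>j<m z. g j z = 0)"
    using fin zeros unfolding Z1_def by auto
  from rolle_multiplicities_pos[OF chain this] obtain Z' m' where
    Z': "finite Z'" "\<forall>z\<in>Z'. \<exists>z1\<in>Z1. \<exists>z2\<in>Z1. z1 \<le> z \<and> z \<le> z2"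
        "\<forall>z\<in>Z'. \<forall>j<m' z. g (Suc j) z = 0" "sum m Z1 \<le> sum m' Z' + 1"
    by blast
  have "sum m Z = sum m Z1"
    unfolding Z1_def by (rule sum.mono_neutral_right[OF fin]) auto
  moreover have "Z' \<subseteq> {a..b}"
  proof
    fix z assume "z \<in> Z'"
    then obtain z1 z2 where "z1 \<in> Z1" "z2 \<in> Z1" "z1 \<le> z" "z \<le> z2" using Z'(2) by blast
    then show "z \<in> {a..b}" using sub unfolding Z1_def by force
  qed
  ultimately show ?thesis using Z'(1,3,4) by (intro exI[of _ Z'] exI[of _ m']) simp
qed

lemma rolle_higher_derivative_zero:
  fixes g :: "nat \<Rightarrow> real \<Rightarrow> real" and m :: "real \<Rightarrow> nat"
  assumes "derivative_chain g" "finite Z" "Z \<subseteq> {a..b}"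
    and "\<And>z j. z \<in> Z \<Longrightarrow> j < m z \<Longrightarrow> g j z = 0" and "k < sum m Z"
  shows "\<exists>\<xi>\<in>{a..b}. g k \<xi> = 0"
  using assms
proof (induction k arbitrary: g Z m)
  case 0
  have "\<exists>z\<in>Z. 0 < m z"
  proof (rule ccontr)
    assume "\<not> ?thesis"
    then have "sum m Z = 0" by (intro sum.neutral) auto
    then show False using "0.prems"(5) by simp
  qed
  then obtain z where z: "z \<in> Z" "0 < m z" ..
  have "z \<in> {a..b}" "g 0 z = 0" using "0.prems"(3) "0.prems"(4)[OF z] z(1) by auto
  then show ?case by blast
next
  case (Suc k)
  obtain Z' m' where Z': "finite Z'" "Z' \<subseteq> {a..b}"
      "\<forall>z\<in>Z'. \<forall>j<m' z. g (Suc j) z = 0" "sum m Z \<le> sum m' Z' + 1"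
    using rolle_multiplicities[where m = m, OF Suc.prems(1-4)] by blast
  have shift: "derivative_chain (\<lambda>n. g (Suc n))"
    using derivative_chain_shift[OF Suc.prems(1), of 1] by simp
  have less: "k < sum m' Z'" using Z'(4) Suc.prems(5) by linarith
  show ?case by (rule Suc.IH[OF shift Z'(1,2) _ less]) (use Z'(3) in blast)
qed

section \<open>The Hermite remainder bound\<close>

definition node_poly :: "real set \<Rightarrow> (real \<Rightarrow> nat) \<Rightarrow> real poly" where
  "node_poly Z m = (\<Prod>z\<in>Z. [:-z, 1:] ^ m z)"

lemma pderiv_dvd_linear_power:
  fixes p :: "'a::idom poly"
  assumes "[:-z,1:] ^ Suc k dvd p"
  shows "[:-z,1:] ^ k dvd pderiv p"
proof -
  obtain q where q: "p = [:-z,1:] ^ Suc k * q" using assms by blast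
  have "pderiv p = [:- z, 1:] ^ Suc k * pderiv q + smult (of_nat (Suc k)) (q * [:- z, 1:] ^ k)"
    unfolding q by (rule lemma_order_pderiv1)
  also have "[:-z,1:] ^ k dvd \<dots>"
  proof (rule dvd_add)
    show "[:- z, 1:] ^ k dvd [:- z, 1:] ^ Suc k * pderiv q"
      by (rule dvd_mult2, rule le_imp_power_dvd) simp
    show "[:- z, 1:] ^ k dvd smult (of_nat (Suc k)) (q * [:- z, 1:] ^ k)"
      by (intro dvd_smult) simp
  qed
  finally show ?thesis .
qed

lemma higher_pderiv_root:
  fixes p :: "'a::idom poly"
  assumes "[:-z,1:] ^ k dvd p" "j < k"
  shows "poly ((pderiv ^^ j) p) z = 0"
proof -
  have "[:-z,1:] ^ (k - i) dvd (pderiv ^^ i) p" if "i \<le> k" for i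
    using that
  proof (induction i)
    case (Suc i)
    then have "[:-z,1:] ^ Suc (k - Suc i) dvd (pderiv ^^ i) p"
      by (metis Suc_diff_Suc Suc_le_lessD less_imp_le_nat)
    then show ?case using pderiv_dvd_linear_power by simp
  qed (use assms in simp)
  from this[of j] assms(2) have "[:-z,1:] ^ Suc (k - Suc j) dvd (pderiv ^^ j) p"
    by (simp add: Suc_diff_Suc)
  then have "[:-z,1:] dvd (pderiv ^^ j) p" by (meson dvd_power dvd_trans zero_less_Suc)
  then show ?thesis by (simp add: poly_eq_0_iff_dvd)
qed

lemma node_poly_higher_pderiv_root:
  "finite Z \<Longrightarrow> z \<in> Z \<Longrightarrow> j < m z \<Longrightarrow> poly ((pderiv ^^ j) (node_poly Z m)) z = 0"
  unfolding node_poly_def by (rule higher_pderiv_root[of _ "m z"]) (auto intro: dvd_prodI)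

lemma node_poly_top_pderiv:
  assumes "finite Z"
  shows "(pderiv ^^ sum m Z) (node_poly Z m) = [:fact (sum m Z):]"
proof -
  define N where "N = sum m Z"
  have degree: "degree (node_poly Z m) = N"
    unfolding node_poly_def N_def by (subst degree_prod_sum_eq) (auto simp: degree_power_eq)
  have monic: "lead_coeff (node_poly Z m) = 1"
    unfolding node_poly_def by (simp add: lead_coeff_prod lead_coeff_power)
  have "degree ((pderiv ^^ N) (node_poly Z m)) = 0"
    by (simp add: degree_higher_pderiv degree)
  moreover have "coeff ((pderiv ^^ N) (node_poly Z m)) 0 = fact N"
    using monic degree by (simp add: coeff_higher_pderiv pochhammer_fact)
  ultimately show ?thesis unfolding N_def by (metis degree_eq_zeroE coeff_pCons_0)
qed

lemma abs_poly_node_poly_le: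
  assumes "finite Z" "Z \<subseteq> {a..b}" "x \<in> {a..b}"
  shows "\<bar>poly (node_poly Z m) x\<bar> \<le> (b - a) ^ sum m Z"
proof -
  have "\<bar>poly (node_poly Z m) x\<bar> = (\<Prod>z\<in>Z. \<bar>x - z\<bar> ^ m z)"
    unfolding node_poly_def by (simp add: poly_prod abs_prod power_abs)
  also have "\<dots> \<le> (\<Prod>z\<in>Z. (b - a) ^ m z)"
    using assms by (intro prod_mono) (force intro!: power_mono)
  also have "\<dots> = (b - a) ^ sum m Z" by (simp add: power_sum)
  finally show ?thesis .
qed

lemma poly_node_poly_nonzero:
  "finite Z \<Longrightarrow> (\<And>z. z \<in> Z \<Longrightarrow> 0 < m z \<Longrightarrow> z \<noteq> x) \<Longrightarrow> poly (node_poly Z m) x \<noteq> 0"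
  unfolding node_poly_def by (auto simp: poly_prod)

text \<open>Subtracting from g the multiple of the node polynomial that also vanishes at x leaves
  sum m Z + 1 zeros, so by Rolle its N-th derivative g N - K N! vanishes somewhere.\<close>

lemma hermite_remainder_bound:
  fixes g :: "nat \<Rightarrow> real \<Rightarrow> real" and m :: "real \<Rightarrow> nat"
  assumes chain: "derivative_chain g" and fin: "finite Z" and sub: "Z \<subseteq> {a..b}"
    and zeros: "\<And>z j. z \<in> Z \<Longrightarrow> j < m z \<Longrightarrow> g j z = 0"
    and x: "x \<in> {a..b}" and S: "\<And>t. t \<in> {a..b} \<Longrightarrow> \<bar>g (sum m Z) t\<bar> \<le> S"
  shows "\<bar>g 0 x\<bar> \<le> S * (b - a) ^ sum m Z / fact (sum m Z)"
proof (cases "g 0 x = 0")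
  case True
  then show ?thesis using S[of x] x by simp
next
  case False
  define N where "N = sum m Z"
  define \<omega> where "\<omega> = node_poly Z m"
  have \<omega>x: "poly \<omega> x \<noteq> 0"
    unfolding \<omega>_def using False zeros by (intro poly_node_poly_nonzero[OF fin]) auto
  define K where "K = g 0 x / poly \<omega> x"
  define \<phi> where "\<phi> n t = g n t - K * poly ((pderiv ^^ n) \<omega>) t" for n t
  have "derivative_chain \<phi>"
    using chain unfolding derivative_chain_real_iff \<phi>_def
    by (auto intro!: derivative_eq_intros simp: poly_DERIV)
  moreover have "\<phi> j z = 0" if "z \<in> insert x Z" "j < (m(x := 1)) z" for z j
  proof (cases "z = x")
    case True
    then show ?thesis using that \<omega>x by (simp add: \<phi>_def K_def)
  next
    case False
    then show ?thesis
      using that zeros node_poly_higher_pderiv_root[OF fin] by (simp add: \<phi>_def \<omega>_def)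
  qed
  moreover have "sum (m(x := 1)) (insert x Z) = N + 1"
  proof -
    have "sum m Z = sum m (Z - {x})"
      using False zeros by (intro sum.mono_neutral_right fin) auto
    moreover have "sum (m(x := 1)) (insert x Z) = 1 + sum m (Z - {x})"
      using fin by (simp add: sum.insert_remove)
    ultimately show ?thesis by (simp add: N_def)
  qed
  ultimately obtain \<xi> where \<xi>: "\<xi> \<in> {a..b}" "\<phi> N \<xi> = 0"
    using rolle_higher_derivative_zero[of \<phi> "insert x Z" a b "m(x := 1)" N] fin sub x by auto
  then have "g N \<xi> = K * fact N"
    unfolding \<phi>_def \<omega>_def N_def node_poly_top_pderiv[OF fin] by simp
  then have K: "\<bar>K\<bar> \<le> S / fact N"
    using S[OF \<xi>(1)] by (simp add: N_def abs_mult field_simps)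
  have "\<bar>g 0 x\<bar> = \<bar>K\<bar> * \<bar>poly \<omega> x\<bar>" using \<omega>x by (simp add: K_def abs_mult)
  also have "\<dots> \<le> (S / fact N) * (b - a) ^ N"
    using K abs_poly_node_poly_le[OF fin sub x, of m] unfolding \<omega>_def N_def[symmetric]
    by (intro mult_mono) auto
  finally show ?thesis unfolding N_def by simp
qed

section \<open>Counting zeros of functions with factorially bounded derivatives\<close>

lemma hermite_remainder_bound_complex:
  fixes F :: "nat \<Rightarrow> real \<Rightarrow> complex" and m :: "real \<Rightarrow> nat"
  assumes chain: "derivative_chain F" and fin: "finite Z" and sub: "Z \<subseteq> {a..b}"
    and zeros: "\<And>z j. z \<in> Z \<Longrightarrow> j < m z \<Longrightarrow> F j z = 0"
    and x: "x \<in> {a..b}" and S: "\<And>t. t \<in> {a..b} \<Longrightarrow> cmod (F (sum m Z) t) \<le> S"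
  shows "cmod (F 0 x) \<le> 2 * (S * (b - a) ^ sum m Z / fact (sum m Z))"
proof -
  have part: "\<bar>Q (F 0 x)\<bar> \<le> S * (b - a) ^ sum m Z / fact (sum m Z)"
    if Q: "bounded_linear Q" "\<And>z. \<bar>Q z\<bar> \<le> cmod z" for Q :: "complex \<Rightarrow> real"
  proof (rule hermite_remainder_bound[of "\<lambda>n t. Q (F n t)", OF _ fin sub _ x])
    show "derivative_chain (\<lambda>n t. Q (F n t))"
      by (rule derivative_chain_bounded_linear[OF Q(1) chain])
    show "Q (F j z) = 0" if "z \<in> Z" "j < m z" for z j
      using zeros[OF that] linear_simps(3)[OF Q(1)] by simp
    show "\<bar>Q (F (sum m Z) t)\<bar> \<le> S" if "t \<in> {a..b}" for t
      using S[OF that] Q(2)[of "F (sum m Z) t"] by linarith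
  qed
  show ?thesis
    using part[OF bounded_linear_Re abs_Re_le_cmod] part[OF bounded_linear_Im abs_Im_le_cmod]
      cmod_le[of "F 0 x"] by linarith
qed

text \<open>With N zeros in the window the Hermite bound at x is 2 C (h r)^N \<le> 2 C 2^-N, while
  \<bar>F 0 x\<bar> \<ge> m0; hence m0 N \<le> m0 2^N \<le> 2 C.\<close>

lemma zero_multiplicities_in_window_le:
  fixes F :: "nat \<Rightarrow> real \<Rightarrow> complex" and m :: "real \<Rightarrow> nat"
  assumes chain: "derivative_chain F" and bd: "factorially_bounded F C r"
    and r: "0 < r" and h: "0 < h" "h * r \<le> 1/2"
    and x: "x \<in> {u..u+h}" and m0: "0 < m0" "m0 \<le> cmod (F 0 x)"
    and fin: "finite Z" and sub: "Z \<subseteq> {u..u+h}" and zeros: "\<And>z j. z \<in> Z \<Longrightarrow> j < m z \<Longrightarrow> F j z = 0"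
  shows "real (sum m Z) \<le> 2 * C / m0"
proof -
  define N where "N = sum m Z"
  have C: "0 \<le> C" using factorially_bounded_nonneg[OF bd] .
  have "cmod (F 0 x) \<le> 2 * (C * fact N * r ^ N * (u + h - u) ^ N / fact N)"
    unfolding N_def
    by (rule hermite_remainder_bound_complex[OF chain fin sub _ x]) (use zeros factorially_boundedD[OF bd] in auto)
  then have "m0 \<le> 2 * (C * fact N * r ^ N * (u + h - u) ^ N / fact N)"
    using m0(2) by linarith
  also have "\<dots> = 2 * C * (h * r) ^ N" by (simp add: power_mult_distrib)
  also have "\<dots> \<le> 2 * C * (1/2) ^ N"
    using h r C by (intro mult_left_mono power_mono) auto
  finally have "m0 * 2 ^ N \<le> 2 * C" by (simp add: field_simps power_one_over)
  moreover have "real N \<le> 2 ^ N"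
    by (metis of_nat_le_iff of_nat_numeral of_nat_power less_imp_le_nat less_exp)
  ultimately have "m0 * real N \<le> 2 * C"
    using m0(1) by (meson mult_left_mono less_imp_le order.trans)
  then show ?thesis unfolding N_def using m0(1) by (simp add: field_simps)
qed

lemma zeros_in_le_windows:
  fixes f :: "real \<Rightarrow> complex"
  assumes h: "0 < h" and M: "0 \<le> M" and L: "0 < L"
    and window: "\<And>u Z. finite Z \<Longrightarrow> Z \<subseteq> {u..u+h} \<Longrightarrow>
                   (\<Sum>x\<in>Z. ennreal_of_enat (zero_mult f x)) \<le> ennreal M"
  shows "zeros_in f L \<le> ennreal ((2 * L / h + 1) * M)"
  unfolding zeros_in_def
proof (rule infsum_le_finite_sums)
  show "(\<lambda>x. ennreal_of_enat (zero_mult f x)) summable_on {- L<..<L}"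
    by (rule nonneg_summable_on_complete) simp
  fix Z assume Z: "finite Z" "Z \<subseteq> {- L<..<L}"
  define K where "K = nat \<lceil>2 * L / h\<rceil>"
  define idx where "idx x = nat \<lfloor>(x + L) / h\<rfloor>" for x
  have idx: "real (idx x) * h \<le> x + L" "x + L < (real (idx x) + 1) * h" "idx x < K" if "x \<in> Z" for x
  proof -
    have "0 \<le> (x + L) / h" "(x + L) / h < 2 * L / h"
      using Z that h by (auto simp: divide_strict_right_mono)
    then have "real (idx x) \<le> (x + L) / h" "(x + L) / h < real (idx x) + 1" "idx x < K"
      unfolding idx_def K_def by linarith+
    then show "real (idx x) * h \<le> x + L" "x + L < (real (idx x) + 1) * h" "idx x < K"
      using h by (auto simp: field_simps)
  qed
  have "(\<Sum>x\<in>Z. ennreal_of_enat (zero_mult f x)) =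
        (\<Sum>i<K. \<Sum>x\<in>{x\<in>Z. idx x = i}. ennreal_of_enat (zero_mult f x))"
    by (rule sum.group[symmetric]) (use Z idx in auto)
  also have "\<dots> \<le> (\<Sum>i<K. ennreal M)"
  proof (rule sum_mono)
    fix i
    have "{x\<in>Z. idx x = i} \<subseteq> {-L + i * h .. (-L + i * h) + h}"
      using idx by (force simp: algebra_simps)
    then show "(\<Sum>x\<in>{x\<in>Z. idx x = i}. ennreal_of_enat (zero_mult f x)) \<le> ennreal M"
      using window Z by auto
  qed
  also have "\<dots> = ennreal (real K * M)"
    using M by (simp add: ennreal_mult ennreal_of_nat_eq_real_of_nat)
  also have "\<dots> \<le> ennreal ((2 * L / h + 1) * M)"
  proof (intro ennreal_leI mult_right_mono M)
    have "0 \<le> 2 * L / h" using L h by auto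
    then show "real K \<le> 2 * L / h + 1" unfolding K_def by linarith
  qed
  finally show "(\<Sum>x\<in>Z. ennreal_of_enat (zero_mult f x)) \<le> ennreal ((2 * L / h + 1) * M)" .
qed

lemma upper_zero_density_le_windows:
  fixes f :: "real \<Rightarrow> complex"
  assumes h: "0 < h" and M: "0 \<le> M"
    and window: "\<And>u Z. finite Z \<Longrightarrow> Z \<subseteq> {u..u+h} \<Longrightarrow>
                   (\<Sum>x\<in>Z. ennreal_of_enat (zero_mult f x)) \<le> ennreal M"
  shows "upper_zero_density f \<le> ennreal (3 * M / (2 * h))"
  unfolding upper_zero_density_def
proof (rule Limsup_bounded)
  show "\<forall>\<^sub>F L in at_top. zeros_in f L / ennreal (2 * L) \<le> ennreal (3 * M / (2 * h))"
    using eventually_ge_at_top[of h]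
  proof eventually_elim
    case (elim L)
    then have L: "L > 0" using h by auto
    have "zeros_in f L / ennreal (2 * L) \<le> ennreal ((2 * L / h + 1) * M) / ennreal (2 * L)"
      by (intro divide_right_mono_ennreal zeros_in_le_windows h M L window)
    also have "\<dots> = ennreal ((2 * L / h + 1) * M / (2 * L))"
      using L M h by (intro divide_ennreal) auto
    also have "\<dots> \<le> ennreal (3 * M / (2 * h))"
    proof (rule ennreal_leI)
      have "(2 * L / h + 1) * M \<le> (3 * L / h) * M"
        using elim h M by (intro mult_right_mono) (auto simp: field_simps)
      then show "(2 * L / h + 1) * M / (2 * L) \<le> 3 * M / (2 * h)"
        using L h by (simp add: field_simps)
    qed
    finally show ?case .
  qed
qed

text \<open>A point where all derivatives vanish would be a zero of every multiplicity.\<close>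

lemma derivative_chain_not_flat:
  fixes F :: "nat \<Rightarrow> real \<Rightarrow> complex"
  assumes chain: "derivative_chain F" and bd: "factorially_bounded F C r"
    and r: "0 < r" and h: "0 < h" "h * r \<le> 1/2" and m0: "0 < m0"
    and good: "\<And>u. \<exists>x\<in>{u..u+h}. m0 \<le> cmod (F 0 x)"
  shows "\<exists>n. F n z \<noteq> 0"
proof (rule ccontr)
  assume "\<nexists>n. F n z \<noteq> 0"
  moreover obtain x where "x \<in> {z..z+h}" "m0 \<le> cmod (F 0 x)" using good by blast
  ultimately have "real (sum (\<lambda>_. nat \<lceil>2 * C / m0\<rceil> + 1) {z}) \<le> 2 * C / m0"
    using h by (intro zero_multiplicities_in_window_le[OF chain bd r h _ m0]) auto
  then show False by simp linarith
qed

theorem upper_zero_density_lt_top: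
  fixes F :: "nat \<Rightarrow> real \<Rightarrow> complex"
  assumes chain: "derivative_chain F" and bd: "factorially_bounded F C r"
    and r: "0 < r" and h: "0 < h" "h * r \<le> 1/2" and m0: "0 < m0"
    and good: "\<And>u. \<exists>x\<in>{u..u+h}. m0 \<le> cmod (F 0 x)"
  shows "upper_zero_density (F 0) < top"
proof -
  define k where "k z = (LEAST n. F n z \<noteq> 0)" for z
  have mult: "zero_mult (F 0) z = enat (k z)" for z
  proof -
    obtain n where "F n z \<noteq> 0" using derivative_chain_not_flat[OF assms] by blast
    from zero_mult_derivative_chain[OF chain this] show ?thesis unfolding k_def .
  qed
  have below: "F j z = 0" if "j < k z" for j z
    using not_less_Least[of j "\<lambda>n. F n z \<noteq> 0"] that unfolding k_def by auto
  have "upper_zero_density (F 0) \<le> ennreal (3 * (2 * C / m0) / (2 * h))"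
  proof (rule upper_zero_density_le_windows[OF h(1)])
    show "0 \<le> 2 * C / m0" using factorially_bounded_nonneg[OF bd] m0 by simp
    fix u Z assume Z: "finite Z" "Z \<subseteq> {u..u+h}"
    obtain x where "x \<in> {u..u+h}" "m0 \<le> cmod (F 0 x)" using good by blast
    then have "real (sum k Z) \<le> 2 * C / m0"
      using below by (intro zero_multiplicities_in_window_le[OF chain bd r h _ m0 _ Z]) auto
    then show "(\<Sum>x\<in>Z. ennreal_of_enat (zero_mult (F 0) x)) \<le> ennreal (2 * C / m0)"
      by (simp add: mult ennreal_of_enat_enat ennreal_of_nat_eq_real_of_nat ennreal_leI)
  qed
  then show ?thesis by (simp add: order_le_less_trans)
qed

section \<open>An identity theorem\<close>

lemma fact_add_le: "fact (n + m) \<le> (fact n * fact m * 2 ^ (n + m) :: real)"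
proof -
  have "fact n * fact (n + m - n) * ((n + m) choose n) = (fact (n + m) :: nat)"
    by (rule binomial_fact_lemma) simp
  then have "fact (n + m) = (fact n * fact m * ((n + m) choose n) :: nat)" by simp
  also have "\<dots> \<le> fact n * fact m * 2 ^ (n + m)"
    by (intro mult_left_mono binomial_le_pow2) simp
  finally have "real (fact (n + m)) \<le> real (fact n * fact m * 2 ^ (n + m))"
    by (simp only: of_nat_le_iff)
  then show ?thesis by simp
qed

lemma factorially_bounded_shift:
  assumes bd: "factorially_bounded F C r" and r: "0 \<le> r"
  shows "factorially_bounded (\<lambda>m. F (n + m)) (C * fact n * (2 * r) ^ n) (2 * r)"
  unfolding factorially_bounded_def
proof (intro allI)
  fix m x
  have "norm (F (n + m) x) \<le> C * fact (n + m) * r ^ (n + m)"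
    using factorially_boundedD[OF bd] .
  also have "\<dots> \<le> C * (fact n * fact m * 2 ^ (n + m)) * r ^ (n + m)"
    using factorially_bounded_nonneg[OF bd] r by (intro mult_right_mono mult_left_mono fact_add_le) auto
  also have "\<dots> = C * fact n * (2 * r) ^ n * fact m * (2 * r) ^ m"
    by (simp add: power_add power_mult_distrib mult_ac)
  finally show "norm (F (n + m) x) \<le> C * fact n * (2 * r) ^ n * fact m * (2 * r) ^ m" .
qed

text \<open>Taylor's formula at a point where all derivatives vanish leaves only the remainder,
  which is at most C (r \<bar>y - x\<bar>)^M \<le> C 4^-M.\<close>

lemma derivative_chain_flat_point_nearby:
  fixes F :: "nat \<Rightarrow> real \<Rightarrow> complex"
  assumes chain: "derivative_chain F" and bd: "factorially_bounded F C r" and r: "0 < r"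
    and flat: "\<And>n. F n x = 0" and y: "\<bar>y - x\<bar> < 1 / (4 * r)"
  shows "F 0 y = 0"
proof -
  have part: "Q (F 0 y) = 0" if Q: "bounded_linear Q" "\<And>z. \<bar>Q z\<bar> \<le> cmod z" for Q :: "complex \<Rightarrow> real"
  proof -
    define g where "g n t = Q (F n t)" for n t
    have ch: "(g n has_real_derivative g (Suc n) t) (at t)" for n t
      using derivative_chain_bounded_linear[OF Q(1) chain]
      unfolding g_def derivative_chain_real_iff by blast
    have g0: "g n x = 0" for n
      using flat linear_simps(3)[OF Q(1)] unfolding g_def by simp
    have "\<bar>g 0 y\<bar> \<le> C * (1/4) ^ M" if M: "0 < M" for M
    proof -
      obtain t where "g 0 y = (\<Sum>m<M. (g m x / fact m) * (y - x) ^ m) + (g M t / fact M) * (y - x) ^ M"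
        using Taylor[of M g "g 0" "min x y" "max x y" x y] ch M by (cases "y = x") auto
      then have "\<bar>g 0 y\<bar> = \<bar>g M t\<bar> / fact M * \<bar>y - x\<bar> ^ M"
        using g0 by (simp add: abs_mult power_abs)
      also have "\<dots> \<le> C * r ^ M * \<bar>y - x\<bar> ^ M"
        using Q(2)[of "F M t"] factorially_boundedD[OF bd, of M t]
        by (intro mult_right_mono) (auto simp: g_def field_simps)
      also have "\<dots> = C * (r * \<bar>y - x\<bar>) ^ M" by (simp add: power_mult_distrib)
      also have "\<dots> \<le> C * (1/4) ^ M"
        using y r factorially_bounded_nonneg[OF bd]
        by (intro mult_left_mono power_mono) (auto simp: field_simps)
      finally show ?thesis .
    qed
    then have "\<exists>N. \<forall>M\<ge>N. \<bar>g 0 y\<bar> \<le> C * (1/4) ^ M"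
      by (intro exI[of _ 1]) auto
    moreover have "(\<lambda>M. C * (1/4) ^ M) \<longlonglongrightarrow> 0"
      by (intro tendsto_mult_right_zero LIMSEQ_power_zero) simp
    ultimately have "\<bar>g 0 y\<bar> \<le> 0"
      using LIMSEQ_le_const by blast
    then show ?thesis unfolding g_def by simp
  qed
  show ?thesis
    using part[OF bounded_linear_Re abs_Re_le_cmod] part[OF bounded_linear_Im abs_Im_le_cmod]
    by (simp add: complex_eq_iff)
qed

lemma derivative_chain_vanishes_on_open:
  fixes F :: "nat \<Rightarrow> real \<Rightarrow> complex"
  assumes chain: "derivative_chain F" and U: "open U" "x \<in> U" and zero: "\<And>x. x \<in> U \<Longrightarrow> F 0 x = 0"
  shows "F n x = 0"
  using U(2)
proof (induction n arbitrary: x)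
  case (Suc n)
  have "(F n has_vector_derivative 0) (at x)"
    by (rule has_vector_derivative_transform_within_open[OF has_vector_derivative_const U(1) Suc.prems])
       (use Suc.IH in auto)
  then show ?case using vector_derivative_unique_at[OF derivative_chainD[OF chain]] by blast
qed (use zero in simp)

text \<open>The flat points form a closed set by continuity and an open one because the shifted chains
  F (n + _) are factorially bounded too; the midpoint of (u,v) is flat.\<close>

theorem derivative_chain_identity:
  fixes F :: "nat \<Rightarrow> real \<Rightarrow> complex"
  assumes chain: "derivative_chain F" and bd: "factorially_bounded F C r" and r: "0 < r"
    and uv: "u < v" and zero: "\<And>x. x \<in> {u<..<v} \<Longrightarrow> F 0 x = 0"
  shows "F 0 y = 0"
proof -
  define Z where "Z = {x. \<forall>n. F n x = 0}"
  have "closed Z"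
  proof -
    have "continuous_on UNIV (F n)" for n
      using derivative_chainD[OF chain]
      by (meson continuous_at_imp_continuous_on has_vector_derivative_continuous)
    then have "closed {x. F n x = 0}" for n
      by (intro closed_Collect_eq) (auto intro: continuous_intros)
    moreover have "Z = (\<Inter>n. {x. F n x = 0})" unfolding Z_def by auto
    ultimately show ?thesis by auto
  qed
  moreover have "open Z"
    unfolding open_dist
  proof (intro ballI exI conjI allI impI)
    fix x y assume "x \<in> Z" "dist y x < 1 / (8 * r)"
    then have "F (n + 0) y = 0" for n
      using derivative_chain_flat_point_nearby[OF derivative_chain_shift[OF chain]
              factorially_bounded_shift[OF bd] _ , of n x y] r
      by (auto simp: Z_def dist_real_def)
    then show "y \<in> Z" unfolding Z_def by simp
  qed (use r in auto)
  moreover have "(u + v) / 2 \<in> Z"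
    using derivative_chain_vanishes_on_open[OF chain, of "{u<..<v}"] zero uv
    unfolding Z_def by auto
  ultimately have "Z = UNIV" using clopen by blast
  then show ?thesis unfolding Z_def by auto
qed

section \<open>Exponential sums with exponentially decaying coefficients\<close>

lemma has_vector_derivative_series:
  fixes u :: "nat \<Rightarrow> real \<Rightarrow> 'a::banach"
  assumes deriv: "\<And>k x. (u k has_vector_derivative u' k x) (at x)"
    and bound: "\<And>k x. norm (u' k x) \<le> M k" and "summable M"
    and summable: "\<And>x. summable (\<lambda>k. u k x)"
  shows "((\<lambda>x. \<Sum>k. u k x) has_vector_derivative (\<Sum>k. u' k x)) (at x)"
proof -
  have uniform: "uniform_limit UNIV (\<lambda>n x. \<Sum>i<n. u' i x) (\<lambda>x. \<Sum>i. u' i x) sequentially"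
    by (rule Weierstrass_m_test[OF _ \<open>summable M\<close>]) (use bound in auto)
  have "\<exists>g. \<forall>x\<in>UNIV. (\<lambda>n. u n x) sums (g x) \<and>
      (g has_derivative (\<lambda>h. h *\<^sub>R (\<Sum>i. u' i x))) (at x within UNIV)"
  proof (rule has_derivative_series[where f' = "\<lambda>i x h. h *\<^sub>R u' i x"])
    show "\<And>n x. x \<in> UNIV \<Longrightarrow> (u n has_derivative (\<lambda>h. h *\<^sub>R u' n x)) (at x within UNIV)"
      using deriv unfolding has_vector_derivative_def by auto
    show "\<forall>\<^sub>F n in sequentially. \<forall>x\<in>UNIV. \<forall>h. norm ((\<Sum>i<n. h *\<^sub>R u' i x) - h *\<^sub>R (\<Sum>i. u' i x)) \<le> e * norm h"
      if "e > 0" for e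
      using uniform_limitD[OF uniform that]
    proof eventually_elim
      case (elim n)
      show ?case
      proof (intro ballI allI)
        fix x h :: real
        have "norm ((\<Sum>i<n. h *\<^sub>R u' i x) - h *\<^sub>R (\<Sum>i. u' i x)) = \<bar>h\<bar> * norm ((\<Sum>i<n. u' i x) - (\<Sum>i. u' i x))"
          by (simp add: scaleR_sum_right[symmetric] scaleR_diff_right[symmetric])
        also have "\<dots> \<le> \<bar>h\<bar> * e" using elim by (intro mult_left_mono) (auto simp: dist_norm less_imp_le)
        finally show "norm ((\<Sum>i<n. h *\<^sub>R u' i x) - h *\<^sub>R (\<Sum>i. u' i x)) \<le> e * norm h"
          by (simp add: mult.commute)
      qed
    qed
    show "(\<lambda>n. u n 0) sums (\<Sum>k. u k 0)" using summable by (simp add: summable_sums)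
  qed auto
  then obtain g where g: "\<And>x. (\<lambda>n. u n x) sums (g x)"
     "\<And>x. (g has_derivative (\<lambda>h. h *\<^sub>R (\<Sum>i. u' i x))) (at x)" by auto
  have "g = (\<lambda>x. \<Sum>k. u k x)" using g(1) by (auto simp: sums_iff)
  then show ?thesis using g(2) unfolding has_vector_derivative_def by auto
qed

lemma power_le_fact_mult_exp:
  fixes x :: real assumes "0 \<le> x"
  shows "x ^ n \<le> fact n * exp x"
proof -
  obtain t where t: "\<bar>t\<bar> \<le> \<bar>x\<bar>" "exp x = (\<Sum>m<Suc n. x ^ m / fact m) + exp t / fact (Suc n) * x ^ Suc n"
    using Maclaurin_exp_le by blast
  have "x ^ n / fact n \<le> (\<Sum>m<Suc n. x ^ m / fact m)"
    by (rule member_le_sum) (use assms in auto)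
  moreover have "0 \<le> exp t / fact (Suc n) * x ^ Suc n" using assms by auto
  ultimately have "x ^ n / fact n \<le> exp x" using t(2) by linarith
  then show ?thesis by (simp add: field_simps)
qed

definition phase :: "real \<Rightarrow> real \<Rightarrow> complex" where
  "phase t s = exp (- 2 * of_real pi * \<i> * of_real (t * s))"

lemma norm_phase [simp]: "cmod (phase t s) = 1"
  unfolding phase_def by (simp add: norm_exp_eq_Re)

lemma phase_add: "phase t (x + y) = phase t x * phase t y"
  unfolding phase_def by (simp add: algebra_simps exp_add[symmetric])

lemma cnj_phase: "cnj (phase t s) = phase t (- s)"
  unfolding phase_def by (simp add: exp_cnj)

lemma phase_has_vector_derivative:
  "(phase t has_vector_derivative (- 2 * of_real pi * \<i> * of_real t) * phase t s) (at s)"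
proof -
  have "((\<lambda>z. exp (- 2 * of_real pi * \<i> * of_real t * z)) has_field_derivative
        (- 2 * of_real pi * \<i> * of_real t) * exp (- 2 * of_real pi * \<i> * of_real t * of_real s)) (at (of_real s))"
    by (auto intro!: derivative_eq_intros)
  from has_vector_derivative_real_field[OF this]
  show ?thesis unfolding phase_def by (simp add: mult.assoc mult.commute mult.left_commute)
qed

text \<open>The n-th derivative of the weighted exponential sum y \<mapsto> \<Sum>k a k w k e(-\<tau> k y);
  for w = (\<lambda>_. 1) and n = 0 this is \<bar>\<alpha>\<bar> times ahat.\<close>

definition twisted_series ::
    "(nat \<Rightarrow> complex) \<Rightarrow> (nat \<Rightarrow> real) \<Rightarrow> nat \<Rightarrow> (nat \<Rightarrow> complex) \<Rightarrow> real \<Rightarrow> complex" where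
  "twisted_series a \<tau> n w s = (\<Sum>k. a k * w k * (- 2 * of_real pi * \<i> * of_real (\<tau> k)) ^ n * phase (\<tau> k) s)"

lemma twisted_series_shift:
  "twisted_series a \<tau> n (\<lambda>k. w k * phase (\<tau> k) u) s = twisted_series a \<tau> n w (u + s)"
  unfolding twisted_series_def phase_add by (simp add: mult_ac)

definition unit_polydisc :: "(nat \<Rightarrow> complex) set" where
  "unit_polydisc = {w. \<forall>k. cmod (w k) \<le> 1}"

definition unit_torus :: "(nat \<Rightarrow> complex) set" where
  "unit_torus = {w. \<forall>k. cmod (w k) = 1}"

lemma unit_torus_subset_polydisc: "unit_torus \<subseteq> unit_polydisc"
  unfolding unit_torus_def unit_polydisc_def by auto

lemma compact_unit_polydisc: "compact unit_polydisc"
proof -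
  have "compactin (product_topology (\<lambda>_. euclidean) UNIV) (PiE (UNIV :: nat set) (\<lambda>_. cball (0::complex) 1))"
    by (simp add: compactin_PiE compactin_euclidean_iff)
  then have "compact (PiE (UNIV :: nat set) (\<lambda>_. cball (0::complex) 1))"
    by (simp only: euclidean_product_topology compactin_euclidean_iff)
  moreover have "unit_polydisc = PiE UNIV (\<lambda>_. cball (0::complex) 1)"
    unfolding unit_polydisc_def PiE_def by (auto simp: extensional_def)
  ultimately show ?thesis by (simp only:)
qed

lemma closed_unit_torus: "closed unit_torus"
proof -
  have "closed {w :: nat \<Rightarrow> complex. cmod (w k) = 1}" for k
    by (intro closed_Collect_eq continuous_on_norm continuous_on_const continuous_on_product_coordinates)
  then have "closed (\<Inter>k. {w :: nat \<Rightarrow> complex. cmod (w k) = 1})" by (intro closed_INT) auto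
  moreover have "unit_torus = (\<Inter>k. {w. cmod (w k) = 1})" unfolding unit_torus_def by auto
  ultimately show ?thesis by simp
qed

lemma norm_power_mean_le:
  fixes x :: complex assumes "cmod x = 1"
  shows "cmod ((\<Sum>n<N. x ^ n) / of_nat N) \<le> 1"
proof (cases "N = 0")
  case False
  have "cmod (\<Sum>n<N. x ^ n) \<le> (\<Sum>n<N. cmod (x ^ n))" by (rule norm_sum)
  also have "\<dots> = of_nat N" using assms by (simp add: norm_power)
  finally show ?thesis using False by (simp add: norm_divide)
qed simp

lemma power_mean_tendsto_0:
  fixes x :: complex assumes x: "cmod x = 1" "x \<noteq> 1"
  shows "(\<lambda>N. (\<Sum>n<N. x ^ n) / of_nat N) \<longlonglongrightarrow> 0"
proof (rule Lim_null_comparison)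
  have "cmod ((\<Sum>n<N. x ^ n) / of_nat N) \<le> (2 / cmod (1 - x)) * (1 / real N)" for N
  proof -
    have "cmod (\<Sum>n<N. x ^ n) = cmod ((1 - x ^ N) / (1 - x))"
      using x by (simp add: sum_gp_strict)
    also have "\<dots> \<le> 2 / cmod (1 - x)"
    proof -
      have "cmod (1 - x ^ N) \<le> 2"
        using norm_triangle_ineq4[of 1 "x ^ N"] x by (simp add: norm_power)
      then show ?thesis using x by (simp add: norm_divide divide_right_mono)
    qed
    finally have "cmod (\<Sum>n<N. x ^ n) / real N \<le> (2 / cmod (1 - x)) / real N"
      by (rule divide_right_mono) simp
    then show ?thesis by (simp add: norm_divide)
  qed
  then show "\<forall>\<^sub>F N in sequentially. cmod ((\<Sum>n<N. x ^ n) / of_nat N) \<le> (2 / cmod (1 - x)) * (1 / real N)"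
    by simp
  show "(\<lambda>N. (2 / cmod (1 - x)) * (1 / real N)) \<longlonglongrightarrow> 0"
    using tendsto_mult_right_zero[OF lim_inverse_n', of "2 / cmod (1 - x)"] by (simp only:)
qed

text \<open>The averages (1/N) \<Sum>n<N w k ^ n tend to 1 where w k = 1 and to 0 elsewhere; Tannery's theorem
  lets the limit pass through the sum.\<close>

lemma suminf_fixed_part_eq_0_if_power_sums_eq_0:
  fixes b w :: "nat \<Rightarrow> complex"
  assumes summable: "summable (\<lambda>k. cmod (b k))" and norm_w: "\<And>k. cmod (w k) = 1"
    and powers: "\<And>n. (\<Sum>k. b k * w k ^ n) = 0"
  shows "(\<Sum>k. if w k = 1 then b k else 0) = 0"
proof -
  define mean where "mean N x = (\<Sum>n<N. x ^ n) / of_nat N" for N and x :: complex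
  have summable_powers: "summable (\<lambda>k. b k * w k ^ n)" for n
    by (rule summable_comparison_test'[OF summable]) (simp add: norm_mult norm_power norm_w)
  have means: "(\<Sum>k. b k * mean N (w k)) = 0" for N
  proof -
    have "(\<Sum>k. b k * mean N (w k)) = (\<Sum>k. (\<Sum>n<N. b k * w k ^ n)) / of_nat N"
      unfolding mean_def
      by (simp add: sum_distrib_left suminf_divide[OF summable_sum[OF summable_powers]])
    also have "\<dots> = (\<Sum>n<N. \<Sum>k. b k * w k ^ n) / of_nat N"
      by (simp add: suminf_sum[OF summable_powers])
    finally show ?thesis using powers by simp
  qed
  have "eventually (\<lambda>N. summable (\<lambda>k. norm (b k * mean N (w k)))) sequentially \<and>
        summable (\<lambda>k. norm (if w k = 1 then b k else 0)) \<and>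
        ((\<lambda>N. \<Sum>k. b k * mean N (w k)) \<longlongrightarrow> (\<Sum>k. if w k = 1 then b k else 0)) sequentially"
  proof (rule tannerys_theorem[where M = "\<lambda>k. cmod (b k)"])
    fix k
    show "((\<lambda>N. b k * mean N (w k)) \<longlongrightarrow> (if w k = 1 then b k else 0)) sequentially"
    proof (cases "w k = 1")
      case True
      have "\<forall>\<^sub>F N in sequentially. b k * mean N (w k) = b k"
        using eventually_gt_at_top[of "0::nat"] by (rule eventually_mono) (simp add: mean_def True)
      then show ?thesis using True by (simp add: tendsto_eventually)
    next
      case False
      then have "(\<lambda>N. mean N (w k)) \<longlonglongrightarrow> 0"
        unfolding mean_def by (rule power_mean_tendsto_0[OF norm_w])
      then show ?thesis using False tendsto_mult_right_zero by auto
    qed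
  next
    have "cmod (mean N (w k)) \<le> 1" for k N
      using norm_power_mean_le[OF norm_w] unfolding mean_def .
    then have "norm (b k * mean N (w k)) \<le> cmod (b k)" for k N
      by (simp add: norm_mult mult_left_le)
    then show "\<forall>\<^sub>F (k, N) in at_top \<times>\<^sub>F sequentially. norm (b k * mean N (w k)) \<le> cmod (b k)"
      by (intro always_eventually) auto
  qed (simp_all add: summable)
  then have "(\<lambda>N. 0::complex) \<longlonglongrightarrow> (\<Sum>k. if w k = 1 then b k else 0)" using means by simp
  then show ?thesis using LIMSEQ_unique tendsto_const by blast
qed

text \<open>A step \<delta> outside the countable set of solutions of (t - l) \<delta> \<in> \<int> separates the
  frequency l from all other frequencies.\<close>

lemma exists_separating_step:
  fixes \<tau> :: "nat \<Rightarrow> real"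
  shows "\<exists>\<delta>. \<forall>k. exp (- 2 * of_real pi * \<i> * of_real ((\<tau> k - l) * \<delta>)) = 1 \<longleftrightarrow> \<tau> k = l"
proof -
  define B where "B = (\<Union>k\<in>{k. \<tau> k \<noteq> l}. range (\<lambda>q::int. of_int q / (\<tau> k - l)))"
  have "countable B" unfolding B_def by (intro countable_UN countable_image) auto
  then have "\<not> {1..2::real} \<subseteq> B" using uncountable_closed_interval[of 1 2] countable_subset by auto
  then obtain \<delta> where \<delta>: "\<delta> \<notin> B" by blast
  have "\<tau> k = l" if "exp (- 2 * of_real pi * \<i> * of_real ((\<tau> k - l) * \<delta>)) = 1" for k
  proof (rule ccontr)
    assume ne: "\<tau> k \<noteq> l"
    from that obtain n :: int where "Im (- 2 * of_real pi * \<i> * of_real ((\<tau> k - l) * \<delta>)) = of_int (2 * n) * pi"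
      unfolding exp_eq_1 by blast
    then have "- 2 * pi * ((\<tau> k - l) * \<delta>) = 2 * of_int n * pi" by simp
    then have "pi * ((\<tau> k - l) * \<delta> + of_int n) = 0" by (simp add: algebra_simps)
    then have "(\<tau> k - l) * \<delta> = of_int (- n)" by simp
    then have "\<delta> = of_int (- n) / (\<tau> k - l)" using ne by (simp add: field_simps)
    then show False using \<delta> ne unfolding B_def by blast
  qed
  then show ?thesis by (intro exI[of _ \<delta>]) auto
qed

locale exp_decay =
  fixes a :: "nat \<Rightarrow> complex" and \<tau> :: "nat \<Rightarrow> real" and \<eta> :: real
  assumes eta_pos: "0 < \<eta>" and summable_decay: "summable (\<lambda>k. cmod (a k) * exp (\<eta> * \<bar>\<tau> k\<bar>))"
begin

definition decay_sum :: real where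
  "decay_sum = (\<Sum>k. cmod (a k) * exp (\<eta> * \<bar>\<tau> k\<bar>))"

lemma coeff_power_le:
  "cmod (a k) * (2 * pi * \<bar>\<tau> k\<bar>) ^ n \<le> fact n * (2 * pi / \<eta>) ^ n * (cmod (a k) * exp (\<eta> * \<bar>\<tau> k\<bar>))"
proof -
  have "2 * pi * \<bar>\<tau> k\<bar> = (2 * pi / \<eta>) * (\<eta> * \<bar>\<tau> k\<bar>)" using eta_pos by simp
  then have "(2 * pi * \<bar>\<tau> k\<bar>) ^ n = (2 * pi / \<eta>) ^ n * (\<eta> * \<bar>\<tau> k\<bar>) ^ n"
    by (simp only: power_mult_distrib)
  also have "\<dots> \<le> (2 * pi / \<eta>) ^ n * (fact n * exp (\<eta> * \<bar>\<tau> k\<bar>))"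
    using eta_pos by (intro mult_left_mono power_le_fact_mult_exp) auto
  finally have "cmod (a k) * (2 * pi * \<bar>\<tau> k\<bar>) ^ n
                  \<le> cmod (a k) * ((2 * pi / \<eta>) ^ n * (fact n * exp (\<eta> * \<bar>\<tau> k\<bar>)))"
    by (rule mult_left_mono) simp
  then show ?thesis by (simp add: mult_ac)
qed

lemma summable_coeff_power: "summable (\<lambda>k. cmod (a k) * (2 * pi * \<bar>\<tau> k\<bar>) ^ n)"
proof (rule summable_comparison_test'[OF summable_mult[OF summable_decay]])
  show "norm (cmod (a k) * (2 * pi * \<bar>\<tau> k\<bar>) ^ n)
          \<le> fact n * (2 * pi / \<eta>) ^ n * (cmod (a k) * exp (\<eta> * \<bar>\<tau> k\<bar>))" for k
    using coeff_power_le by (simp add: abs_mult)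
qed

lemma summable_norm_coeff: "summable (\<lambda>k. cmod (a k))"
  using summable_coeff_power[of 0] by simp

lemma norm_twisted_term_le:
  assumes "cmod (w k) \<le> 1"
  shows "cmod (a k * w k * (- 2 * of_real pi * \<i> * of_real (\<tau> k)) ^ n * phase (\<tau> k) s)
           \<le> cmod (a k) * (2 * pi * \<bar>\<tau> k\<bar>) ^ n"
proof -
  have "cmod (a k * w k * (- 2 * of_real pi * \<i> * of_real (\<tau> k)) ^ n * phase (\<tau> k) s)
      = cmod (a k) * cmod (w k) * (2 * pi * \<bar>\<tau> k\<bar>) ^ n"
    by (simp add: norm_mult norm_power)
  also have "\<dots> \<le> cmod (a k) * 1 * (2 * pi * \<bar>\<tau> k\<bar>) ^ n"
    using assms by (intro mult_right_mono mult_left_mono) auto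
  finally show ?thesis by simp
qed

lemma summable_twisted_terms:
  assumes "w \<in> unit_polydisc"
  shows "summable (\<lambda>k. a k * w k * (- 2 * of_real pi * \<i> * of_real (\<tau> k)) ^ n * phase (\<tau> k) s)"
  by (rule summable_comparison_test'[OF summable_coeff_power[of n]])
     (use norm_twisted_term_le assms in \<open>auto simp: unit_polydisc_def\<close>)

lemma twisted_series_factorially_bounded:
  assumes "w \<in> unit_polydisc"
  shows "factorially_bounded (\<lambda>n. twisted_series a \<tau> n w) decay_sum (2 * pi / \<eta>)"
  unfolding factorially_bounded_def
proof (intro allI)
  fix n s
  have "cmod (twisted_series a \<tau> n w s)
          \<le> (\<Sum>k. cmod (a k * w k * (- 2 * of_real pi * \<i> * of_real (\<tau> k)) ^ n * phase (\<tau> k) s))"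
    unfolding twisted_series_def
    by (rule summable_norm, rule summable_comparison_test'[OF summable_coeff_power[of n]])
       (use norm_twisted_term_le assms in \<open>auto simp: unit_polydisc_def\<close>)
  also have "\<dots> \<le> (\<Sum>k. cmod (a k) * (2 * pi * \<bar>\<tau> k\<bar>) ^ n)"
    by (intro suminf_le summable_coeff_power summable_comparison_test'[OF summable_coeff_power[of n]])
       (use norm_twisted_term_le assms in \<open>auto simp: unit_polydisc_def\<close>)
  also have "\<dots> \<le> (\<Sum>k. fact n * (2 * pi / \<eta>) ^ n * (cmod (a k) * exp (\<eta> * \<bar>\<tau> k\<bar>)))"
    by (intro suminf_le summable_coeff_power summable_mult summable_decay coeff_power_le)
  also have "\<dots> = fact n * (2 * pi / \<eta>) ^ n * decay_sum"
    unfolding decay_sum_def by (rule suminf_mult[OF summable_decay])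
  finally show "norm (twisted_series a \<tau> n w s) \<le> decay_sum * fact n * (2 * pi / \<eta>) ^ n"
    by (simp add: mult_ac)
qed

lemma twisted_series_derivative_chain:
  assumes w: "w \<in> unit_polydisc"
  shows "derivative_chain (\<lambda>n. twisted_series a \<tau> n w)"
  unfolding derivative_chain_def
proof (intro allI)
  fix n s
  let ?c = "\<lambda>k. - 2 * of_real pi * \<i> * of_real (\<tau> k)"
  have "((\<lambda>x. \<Sum>k. a k * w k * ?c k ^ n * phase (\<tau> k) x) has_vector_derivative
        (\<Sum>k. a k * w k * ?c k ^ n * (?c k * phase (\<tau> k) s))) (at s)"
  proof (rule has_vector_derivative_series[OF _ _ summable_coeff_power[of "Suc n"]])
    show "((\<lambda>x. a k * w k * ?c k ^ n * phase (\<tau> k) x) has_vector_derivative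
            a k * w k * ?c k ^ n * (?c k * phase (\<tau> k) x)) (at x)" for k x
      by (intro has_vector_derivative_mult_right phase_has_vector_derivative)
    show "cmod (a k * w k * ?c k ^ n * (?c k * phase (\<tau> k) x)) \<le> cmod (a k) * (2 * pi * \<bar>\<tau> k\<bar>) ^ Suc n"
      for k x
      using norm_twisted_term_le[of w k "Suc n" x] w by (simp add: unit_polydisc_def mult_ac)
  qed (rule summable_twisted_terms[OF w])
  then show "(twisted_series a \<tau> n w has_vector_derivative twisted_series a \<tau> (Suc n) w s) (at s)"
    unfolding twisted_series_def by (simp add: mult_ac)
qed

lemma continuous_on_twisted_series: "continuous_on unit_polydisc (\<lambda>w. twisted_series a \<tau> n w s)"
proof -
  let ?t = "\<lambda>k w. a k * w k * (- 2 * of_real pi * \<i> * of_real (\<tau> k)) ^ n * phase (\<tau> k) s"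
  have "uniform_limit unit_polydisc (\<lambda>N w. \<Sum>k<N. ?t k w) (\<lambda>w. \<Sum>k. ?t k w) sequentially"
    by (rule Weierstrass_m_test[OF _ summable_coeff_power[of n]])
       (use norm_twisted_term_le in \<open>auto simp: unit_polydisc_def\<close>)
  moreover have "continuous_on unit_polydisc (\<lambda>w. \<Sum>k<N. ?t k w)" for N
    by (intro continuous_intros continuous_on_product_then_coordinatewise continuous_on_id)
  ultimately show ?thesis unfolding twisted_series_def
    by (intro uniform_limit_theorem) auto
qed

definition orbit :: "real \<Rightarrow> nat \<Rightarrow> complex" where
  "orbit u = (\<lambda>k. phase (\<tau> k) u)"

definition orbit_closure :: "(nat \<Rightarrow> complex) set" where
  "orbit_closure = closure (range orbit)"

lemma orbit_in_closure: "orbit u \<in> orbit_closure"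
  unfolding orbit_closure_def by (simp add: closure_subset[THEN subsetD])

lemma orbit_closure_subset_torus: "orbit_closure \<subseteq> unit_torus"
proof -
  have "range orbit \<subseteq> unit_torus" unfolding unit_torus_def orbit_def by auto
  then show ?thesis unfolding orbit_closure_def using closed_unit_torus closure_minimal by blast
qed

lemma orbit_closure_subset_polydisc: "orbit_closure \<subseteq> unit_polydisc"
  using orbit_closure_subset_torus unit_torus_subset_polydisc by blast

lemma compact_orbit_closure: "compact orbit_closure"
proof -
  have "compact (unit_polydisc \<inter> orbit_closure)"
    by (rule compact_Int_closed[OF compact_unit_polydisc]) (simp add: orbit_closure_def)
  then show ?thesis using orbit_closure_subset_polydisc by (simp add: Int_absorb1)
qed

lemma cnj_in_orbit_closure:
  assumes "w \<in> orbit_closure"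
  shows "(\<lambda>k. cnj (w k)) \<in> orbit_closure"
proof -
  have "continuous_on UNIV (\<lambda>v :: nat \<Rightarrow> complex. (\<lambda>k. cnj (v k)))"
  proof (rule continuous_on_coordinatewise_then_product)
    fix i
    show "continuous_on UNIV (\<lambda>x::nat\<Rightarrow>complex. cnj (x i))"
      using bounded_linear.continuous_on[OF bounded_linear_cnj continuous_on_product_coordinates[of i]]
      by simp
  qed
  then have "(\<lambda>v. (\<lambda>k. cnj (v k))) ` closure (range orbit) \<subseteq> closure ((\<lambda>v. (\<lambda>k. cnj (v k))) ` range orbit)"
    by (rule continuous_image_closure_subset) auto
  moreover have "(\<lambda>v. (\<lambda>k. cnj (v k))) ` range orbit = range orbit"
  proof -
    have "(\<lambda>k. cnj (orbit u k)) = orbit (- u)" for u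
      unfolding orbit_def by (simp add: cnj_phase)
    then show ?thesis by (auto simp: image_iff) (metis minus_minus)
  qed
  ultimately show ?thesis using assms unfolding orbit_closure_def by auto
qed

text \<open>If the twisted series of w vanished on (0,h), it would vanish identically by the identity
  theorem; by continuity in the weights the series twisted by w v then vanishes for every v in the
  orbit closure, and v = cnj w gives back the untwisted series.\<close>

lemma twisted_series_nonzero_in_interval:
  assumes nz: "twisted_series a \<tau> 0 (\<lambda>_. 1) y0 \<noteq> 0" and w: "w \<in> orbit_closure" and h: "0 < h"
  shows "\<exists>s\<in>{0<..<h}. twisted_series a \<tau> 0 w s \<noteq> 0"
proof (rule ccontr)
  assume "\<not> ?thesis"
  then have zero: "\<And>s. s \<in> {0<..<h} \<Longrightarrow> twisted_series a \<tau> 0 w s = 0" by auto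
  have wT: "w \<in> unit_torus" using w orbit_closure_subset_torus by auto
  then have wD: "w \<in> unit_polydisc" using unit_torus_subset_polydisc by auto
  have all0: "twisted_series a \<tau> 0 w y = 0" for y
    using derivative_chain_identity[OF twisted_series_derivative_chain[OF wD]
            twisted_series_factorially_bounded[OF wD] _ h zero] eta_pos by simp
  define Q where "Q s = unit_polydisc \<inter> (\<lambda>v. twisted_series a \<tau> 0 (\<lambda>k. w k * v k) s) -` {0}" for s
  have mult: "(\<lambda>k. w k * v k) \<in> unit_polydisc" if "v \<in> unit_polydisc" for v
    using that wT unfolding unit_polydisc_def unit_torus_def by (auto simp: norm_mult)
  have "continuous_on unit_polydisc (\<lambda>v. twisted_series a \<tau> 0 (\<lambda>k. w k * v k) s)" for s
  proof (rule continuous_on_compose2[OF continuous_on_twisted_series])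
    show "continuous_on unit_polydisc (\<lambda>v :: nat \<Rightarrow> complex. (\<lambda>k. w k * v k))"
      by (rule continuous_on_subset[OF _ subset_UNIV])
         (intro continuous_on_coordinatewise_then_product continuous_on_mult continuous_on_const
                continuous_on_product_coordinates)
  qed (use mult in auto)
  then have "closed (Q s)" for s
    unfolding Q_def using compact_unit_polydisc compact_imp_closed
    by (intro continuous_closed_preimage) auto
  moreover have "range orbit \<subseteq> Q s" for s
  proof
    fix v assume "v \<in> range orbit"
    then obtain u where u: "v = orbit u" by auto
    have "twisted_series a \<tau> 0 (\<lambda>k. w k * v k) s = twisted_series a \<tau> 0 w (u + s)"
      unfolding u orbit_def by (rule twisted_series_shift)
    moreover have "v \<in> unit_polydisc" unfolding u orbit_def unit_polydisc_def by simp
    ultimately show "v \<in> Q s" unfolding Q_def using all0 by simp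
  qed
  ultimately have "orbit_closure \<subseteq> Q s" for s
    unfolding orbit_closure_def by (simp add: closure_minimal)
  then have "twisted_series a \<tau> 0 (\<lambda>k. w k * cnj (w k)) y0 = 0"
    using cnj_in_orbit_closure[OF w] unfolding Q_def by auto
  moreover have "(\<lambda>k. w k * cnj (w k)) = (\<lambda>_. 1)"
    using wT unfolding unit_torus_def by (auto simp: complex_norm_square[symmetric])
  ultimately show False using nz by simp
qed

text \<open>Each point of the compact orbit closure keeps the twisted series away from 0 at some point
  of (0,h), uniformly on a neighbourhood; finitely many neighbourhoods cover the orbit closure.\<close>

lemma uniform_lower_bound_on_windows:
  assumes nz: "twisted_series a \<tau> 0 (\<lambda>_. 1) y0 \<noteq> 0" and h: "0 < h"
  shows "\<exists>m>0. \<forall>u. \<exists>x\<in>{u..u+h}. m \<le> cmod (twisted_series a \<tau> 0 (\<lambda>_. 1) x)"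
proof -
  obtain sw where sw: "\<And>w. w \<in> orbit_closure \<Longrightarrow> sw w \<in> {0<..<h} \<and> twisted_series a \<tau> 0 w (sw w) \<noteq> 0"
    using twisted_series_nonzero_in_interval[OF nz _ h] by metis
  define cw where "cw w = cmod (twisted_series a \<tau> 0 w (sw w)) / 2" for w
  have "\<exists>V. open V \<and> V \<inter> unit_polydisc = {v. cw w < cmod (twisted_series a \<tau> 0 v (sw w))} \<inter> unit_polydisc"
    for w
  proof -
    have "continuous_on unit_polydisc (\<lambda>v. cmod (twisted_series a \<tau> 0 v (sw w)))"
      by (intro continuous_intros continuous_on_twisted_series)
    then obtain V where "open V"
        "V \<inter> unit_polydisc = (\<lambda>v. cmod (twisted_series a \<tau> 0 v (sw w))) -` {cw w<..} \<inter> unit_polydisc"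
      unfolding continuous_on_open_invariant by (meson open_greaterThan)
    then show ?thesis by (intro exI[of _ V]) auto
  qed
  then obtain V where V: "\<And>w. open (V w)"
      "\<And>w. V w \<inter> unit_polydisc = {v. cw w < cmod (twisted_series a \<tau> 0 v (sw w))} \<inter> unit_polydisc"
    by metis
  have cover: "orbit_closure \<subseteq> \<Union> (V ` orbit_closure)"
  proof
    fix w assume w: "w \<in> orbit_closure"
    then have "w \<in> unit_polydisc" "cw w < cmod (twisted_series a \<tau> 0 w (sw w))"
      using orbit_closure_subset_polydisc sw[OF w] unfolding cw_def by auto
    then show "w \<in> \<Union> (V ` orbit_closure)" using V(2)[of w] w by blast
  qed
  obtain W where W: "W \<subseteq> orbit_closure" "finite W" "orbit_closure \<subseteq> \<Union> (V ` W)"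
    by (rule compactE_image[OF compact_orbit_closure V(1) cover]) auto
  have "orbit 0 \<in> \<Union> (V ` W)" using subsetD[OF W(3) orbit_in_closure] .
  then have "W \<noteq> {}" by auto
  have cw_pos: "cw w > 0" if "w \<in> orbit_closure" for w using sw[OF that] unfolding cw_def by auto
  define m where "m = Min (cw ` W)"
  have "m > 0"
    unfolding m_def using W(1,2) \<open>W \<noteq> {}\<close> cw_pos by (simp add: Min_gr_iff subset_iff)
  moreover have "\<exists>x\<in>{u..u+h}. m \<le> cmod (twisted_series a \<tau> 0 (\<lambda>_. 1) x)" for u
  proof -
    have "orbit u \<in> \<Union> (V ` W)" using subsetD[OF W(3) orbit_in_closure] .
    then obtain w where w: "w \<in> W" "orbit u \<in> V w" by blast
    have "orbit u \<in> unit_polydisc" unfolding orbit_def unit_polydisc_def by simp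
    with w(2) have "orbit u \<in> V w \<inter> unit_polydisc" by simp
    then have "cw w < cmod (twisted_series a \<tau> 0 (orbit u) (sw w))" unfolding V(2) by simp
    moreover have "twisted_series a \<tau> 0 (orbit u) (sw w) = twisted_series a \<tau> 0 (\<lambda>_. 1) (u + sw w)"
      using twisted_series_shift[of a \<tau> 0 "\<lambda>_. 1" u "sw w"] unfolding orbit_def by simp
    moreover have "m \<le> cw w" unfolding m_def using W(2) w(1) by simp
    moreover have "sw w \<in> {0<..<h}" using sw w(1) W(1) by blast
    ultimately show ?thesis by (intro bexI[of _ "u + sw w"]) auto
  qed
  ultimately show ?thesis by blast
qed

theorem upper_zero_density_twisted_series_lt_top:
  assumes nz: "twisted_series a \<tau> 0 (\<lambda>_. 1) y0 \<noteq> 0" and c: "c \<noteq> 0"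
  shows "upper_zero_density (\<lambda>y. c * twisted_series a \<tau> 0 (\<lambda>_. 1) y) < top"
proof -
  define r where "r = 2 * pi / \<eta>"
  define h where "h = \<eta> / (4 * pi)"
  have r: "0 < r" and h: "0 < h" "h * r \<le> 1/2" unfolding r_def h_def using eta_pos by auto
  obtain m where m: "0 < m" "\<And>u. \<exists>x\<in>{u..u+h}. m \<le> cmod (twisted_series a \<tau> 0 (\<lambda>_. 1) x)"
    using uniform_lower_bound_on_windows[OF nz h(1)] by blast
  define F where "F n y = c * twisted_series a \<tau> n (\<lambda>_. 1) y" for n y
  have one: "(\<lambda>_. 1) \<in> unit_polydisc" unfolding unit_polydisc_def by simp
  have chain: "derivative_chain F"
    using twisted_series_derivative_chain[OF one]
    unfolding F_def derivative_chain_def by (auto intro: has_vector_derivative_mult_right)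
  have bound: "factorially_bounded F (cmod c * decay_sum) r"
    using twisted_series_factorially_bounded[OF one]
    unfolding F_def r_def factorially_bounded_def by (auto simp: norm_mult mult_left_mono mult.assoc)
  have good: "\<exists>x\<in>{u..u+h}. cmod c * m \<le> cmod (F 0 x)" for u
    using m(2)[of u] c unfolding F_def by (auto simp: norm_mult)
  have "upper_zero_density (F 0) < top"
    using c m(1) by (intro upper_zero_density_lt_top[OF chain bound r h _ good]) simp
  then show ?thesis unfolding F_def by simp
qed

lemma summable_coeff_mult:
  "(\<And>k. cmod (c k) \<le> 1) \<Longrightarrow> summable (\<lambda>k. a k * c k)"
  by (rule summable_comparison_test'[OF summable_norm_coeff]) (simp add: norm_mult mult_left_le)

lemma twisted_series_shifted_power_sums:
  assumes zero: "\<And>y. twisted_series a \<tau> 0 (\<lambda>_. 1) y = 0"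
  shows "(\<Sum>k. a k * exp (- 2 * of_real pi * \<i> * of_real ((\<tau> k - l) * \<delta>)) ^ n) = 0"
proof -
  define y where "y = real n * \<delta>"
  have "0 = (\<Sum>k. a k * phase (\<tau> k) y) * exp (2 * of_real pi * \<i> * of_real (l * y))"
    using zero[of y] unfolding twisted_series_def by simp
  also have "\<dots> = (\<Sum>k. a k * phase (\<tau> k) y * exp (2 * of_real pi * \<i> * of_real (l * y)))"
    by (rule suminf_mult2, rule summable_coeff_mult) simp
  also have "\<dots> = (\<Sum>k. a k * exp (- 2 * of_real pi * \<i> * of_real ((\<tau> k - l) * \<delta>)) ^ n)"
  proof (rule suminf_cong)
    fix k
    have "phase (\<tau> k) y * exp (2 * of_real pi * \<i> * of_real (l * y)) =
          exp (of_nat n * (- 2 * of_real pi * \<i> * of_real ((\<tau> k - l) * \<delta>)))"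
      unfolding phase_def y_def by (simp add: exp_add[symmetric] algebra_simps)
    also have "\<dots> = exp (- 2 * of_real pi * \<i> * of_real ((\<tau> k - l) * \<delta>)) ^ n"
      by (rule exp_of_nat_mult)
    finally show "a k * phase (\<tau> k) y * exp (2 * of_real pi * \<i> * of_real (l * y)) =
               a k * exp (- 2 * of_real pi * \<i> * of_real ((\<tau> k - l) * \<delta>)) ^ n"
      by (simp add: mult.assoc)
  qed
  finally show ?thesis by simp
qed

text \<open>Multiplying by e(l y) moves the frequency l to 0, and sampling at a separating step turns
  the series into power sums.\<close>

lemma frequency_sum_eq_0:
  assumes zero: "\<And>y. twisted_series a \<tau> 0 (\<lambda>_. 1) y = 0"
  shows "(\<Sum>k. if \<tau> k = l then a k else 0) = 0"
proof -
  obtain \<delta> where \<delta>: "\<And>k. exp (- 2 * of_real pi * \<i> * of_real ((\<tau> k - l) * \<delta>)) = 1 \<longleftrightarrow> \<tau> k = l"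
    using exists_separating_step by blast
  have "(\<Sum>k. if exp (- 2 * of_real pi * \<i> * of_real ((\<tau> k - l) * \<delta>)) = 1 then a k else 0) = 0"
    by (rule suminf_fixed_part_eq_0_if_power_sums_eq_0[OF summable_norm_coeff _
               twisted_series_shifted_power_sums[OF zero]])
       (simp add: norm_exp_eq_Re)
  then show ?thesis by (simp only: \<delta>)
qed

lemma suminf_eq_0_if_frequency_sums_eq_0:
  assumes freq: "\<And>l. (\<Sum>k. if \<tau> k = l then a k else 0) = 0"
    and E: "\<And>k k'. \<tau> k = \<tau> k' \<Longrightarrow> E k = E k'" and norm_E: "\<And>k. cmod (E k) \<le> 1"
  shows "(\<Sum>k. a k * E k) = 0"
proof -
  define b where "b k = a k * E k" for k
  have "cmod (b k) \<le> cmod (a k)" for k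
    unfolding b_def using norm_E[of k] by (simp add: norm_mult mult_left_le)
  then have sb: "summable (\<lambda>k. cmod (b k))"
    by (intro summable_comparison_test'[OF summable_norm_coeff]) auto
  have hb: "(b has_sum (\<Sum>k. b k)) UNIV"
    by (rule norm_summable_imp_has_sum[OF sb summable_sums[OF summable_norm_cancel[OF sb]]])
  define g where "g = (\<lambda>(l::real, k::nat). b k)"
  define SS where "SS = Sigma (range \<tau>) (\<lambda>l. {k. \<tau> k = l})"
  have "inj_on (\<lambda>k. (\<tau> k, k)) UNIV" by (auto simp: inj_on_def)
  moreover have "(\<lambda>k. (\<tau> k, k)) ` UNIV = SS" unfolding SS_def by (auto simp: image_iff)
  moreover have "g \<circ> (\<lambda>k. (\<tau> k, k)) = b" unfolding g_def by auto
  ultimately have hg: "(g has_sum (\<Sum>k. b k)) SS"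
    using has_sum_reindex[of "\<lambda>k. (\<tau> k, k)" UNIV g] hb by simp
  have fibre: "((\<lambda>k. g (l, k)) has_sum 0) {k. \<tau> k = l}" if l: "l \<in> range \<tau>" for l
  proof -
    obtain k0 where k0: "\<tau> k0 = l" using l by auto
    define a' where "a' k = (if \<tau> k = l then a k else 0)" for k
    have sa: "summable (\<lambda>k. cmod (a' k))"
      unfolding a'_def by (rule summable_comparison_test'[OF summable_norm_coeff]) auto
    have "(a' has_sum (\<Sum>k. a' k)) UNIV"
      by (rule norm_summable_imp_has_sum[OF sa summable_sums[OF summable_norm_cancel[OF sa]]])
    then have "(a' has_sum 0) UNIV" using freq[of l] unfolding a'_def by simp
    then have "(a has_sum 0) {k. \<tau> k = l}"
      by (rule has_sum_cong_neutral[THEN iffD1, rotated -1]) (auto simp: a'_def)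
    then have "((\<lambda>k. a k * E k0) has_sum 0 * E k0) {k. \<tau> k = l}"
      by (rule has_sum_cmult_left)
    moreover have "b k = a k * E k0" if "\<tau> k = l" for k
      unfolding b_def using E[of k k0] that k0 by simp
    ultimately have "(b has_sum 0) {k. \<tau> k = l}"
      using has_sum_cong[of "{k. \<tau> k = l}" b "\<lambda>k. a k * E k0" 0] by auto
    then show ?thesis unfolding g_def by simp
  qed
  have "((\<lambda>_. 0::complex) has_sum (\<Sum>k. b k)) (range \<tau>)"
    by (rule has_sum_SigmaD[OF hg[unfolded SS_def]]) (use fibre in \<open>auto simp: g_def\<close>)
  then have "(\<Sum>k. b k) = 0" using has_sum_0_simp has_sum_unique by blast
  then show ?thesis unfolding b_def .
qed

lemma twisted_series_not_identically_zero:
  assumes E: "\<And>k k'. \<tau> k = \<tau> k' \<Longrightarrow> E k = E k'" "\<And>k. cmod (E k) \<le> 1"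
    and nz: "(\<Sum>k. a k * E k) \<noteq> 0"
  shows "\<exists>y. twisted_series a \<tau> 0 (\<lambda>_. 1) y \<noteq> 0"
proof (rule ccontr)
  assume "\<nexists>y. twisted_series a \<tau> 0 (\<lambda>_. 1) y \<noteq> 0"
  then have "\<And>y. twisted_series a \<tau> 0 (\<lambda>_. 1) y = 0" by blast
  then have "(\<Sum>k. a k * E k) = 0"
    by (intro suminf_eq_0_if_frequency_sums_eq_0 frequency_sum_eq_0 E)
  with nz show False ..
qed

end

section \<open>Relations between powers of an algebraic number and its conjugates\<close>

lemma map_poly_of_int_add:
  "map_poly (of_int :: int \<Rightarrow> 'a::comm_ring_1) (p + q) = map_poly of_int p + map_poly of_int q"
  by (rule poly_eqI) (simp add: coeff_map_poly)

lemma map_poly_of_int_mult: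
  "map_poly (of_int :: int \<Rightarrow> 'a::comm_ring_1) (p * q) = map_poly of_int p * map_poly of_int q"
  by (rule poly_eqI) (simp add: coeff_map_poly coeff_mult)

lemma map_poly_of_int_smult:
  "map_poly (of_int :: int \<Rightarrow> 'a::comm_ring_1) (smult c q) = smult (of_int c) (map_poly of_int q)"
  by (rule poly_eqI) (simp add: coeff_map_poly)

lemma map_poly_of_int_const [simp]: "map_poly (of_int :: int \<Rightarrow> 'a::comm_ring_1) [:c:] = [:of_int c:]"
  by (rule poly_eqI) (simp add: coeff_map_poly coeff_pCons split: nat.splits)

lemma map_poly_of_int_sum:
  "map_poly (of_int :: int \<Rightarrow> 'a::comm_ring_1) (\<Sum>j\<in>J. f j) = (\<Sum>j\<in>J. map_poly of_int (f j))"
  by (induction J rule: infinite_finite_induct) (simp_all add: map_poly_of_int_add)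

lemma poly_of_int_pseudo_mod_root:
  fixes p t :: "int poly" and \<alpha> :: complex
  assumes "t \<noteq> 0" "poly (map_poly of_int p) \<alpha> = 0" "poly (map_poly of_int t) \<alpha> = 0"
  shows "poly (map_poly of_int (pseudo_mod p t)) \<alpha> = 0"
proof -
  obtain b w where "smult b p = t * w + pseudo_mod p t"
    using pseudo_mod(1)[OF assms(1), of p] by blast
  then have "poly (map_poly of_int (smult b p)) \<alpha> = poly (map_poly of_int (t * w + pseudo_mod p t)) \<alpha>"
    by simp
  then show ?thesis
    using assms(2,3) by (simp add: map_poly_of_int_smult map_poly_of_int_add map_poly_of_int_mult)
qed

text \<open>Pseudo-dividing p by a smaller polynomial vanishing at \<alpha> leaves an even smaller one, so by
  induction the division is exact, which irreducibility rules out.\<close>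

lemma irreducible_root_minimal:
  fixes p t :: "int poly" and \<alpha> :: complex
  assumes irr: "irreducible p" and root: "poly (map_poly of_int p) \<alpha> = 0"
    and "t \<noteq> 0" "degree t < degree p"
  shows "poly (map_poly of_int t) \<alpha> \<noteq> 0"
  using assms(3,4)
proof (induction "degree t" arbitrary: t rule: less_induct)
  case less
  show ?case
  proof
    assume t\<alpha>: "poly (map_poly of_int t) \<alpha> = 0"
    show False
    proof (cases "degree t = 0")
      case True
      then obtain c where "t = [:c:]" by (metis degree_eq_zeroE)
      then show False using t\<alpha> less.prems(1) by simp
    next
      case False
      obtain b w where bw: "b \<noteq> 0" "smult b p = t * w + pseudo_mod p t"
        using pseudo_mod(1)[OF less.prems(1), of p] by blast
      have "pseudo_mod p t = 0"
      proof (rule ccontr)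
        assume "pseudo_mod p t \<noteq> 0"
        moreover from this have "degree (pseudo_mod p t) < degree t"
          using pseudo_mod(2)[OF less.prems(1), of p] by blast
        ultimately show False
          using less.hyps[of "pseudo_mod p t"] less.prems(2)
            poly_of_int_pseudo_mod_root[OF less.prems(1) root t\<alpha>] by simp
      qed
      have "p dvd smult b p" by (rule dvd_smult) simp
      then have "p dvd t * w" using bw(2) \<open>pseudo_mod p t = 0\<close> by simp
      then have "p dvd t \<or> p dvd w"
        using irreducible_imp_prime_poly[OF irr] prime_elem_dvd_multD by blast
      then show False
      proof
        assume "p dvd t"
        then show False using dvd_imp_degree_le[OF _ less.prems(1)] less.prems(2) by fastforce
      next
        assume "p dvd w"
        then obtain w' where w': "w = p * w'" by blast
        have "p \<noteq> 0" using irr by auto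
        have "[:b:] * p = (t * w') * p" using bw(2) \<open>pseudo_mod p t = 0\<close> w' by (simp add: mult_ac)
        then have bt: "[:b:] = t * w'" by (rule mult_right_cancel[OF \<open>p \<noteq> 0\<close>, THEN iffD1])
        then have "w' \<noteq> 0" using bw(1) by auto
        then have "degree t + degree w' = degree [:b:]"
          using bt degree_mult_eq[OF less.prems(1)] by simp
        then have "degree t + degree w' = 0" by simp
        then show False using False by simp
      qed
    qed
  qed
qed

lemma irreducible_dvd_if_common_root:
  fixes p q :: "int poly" and \<alpha> :: complex
  assumes irr: "irreducible p" and deg: "degree p \<ge> 1"
    and p\<alpha>: "poly (map_poly of_int p) \<alpha> = 0" and q\<alpha>: "poly (map_poly of_int q) \<alpha> = 0"
  shows "p dvd q"
proof -
  have p0: "p \<noteq> 0" using irr by auto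
  obtain b w where bw: "b \<noteq> 0" "smult b q = p * w + pseudo_mod q p"
    using pseudo_mod(1)[OF p0, of q] by blast
  have "pseudo_mod q p = 0"
  proof (rule ccontr)
    assume ne: "pseudo_mod q p \<noteq> 0"
    then have "degree (pseudo_mod q p) < degree p" using pseudo_mod(2)[OF p0, of q] by blast
    from irreducible_root_minimal[OF irr p\<alpha> ne this] poly_of_int_pseudo_mod_root[OF p0 q\<alpha> p\<alpha>]
    show False by simp
  qed
  then have "p dvd [:b:] * q" using bw(2) by simp
  then have "p dvd [:b:] \<or> p dvd q"
    using irreducible_imp_prime_poly[OF irr] prime_elem_dvd_multD by blast
  moreover have "\<not> p dvd [:b:]"
    using dvd_imp_degree_le[of p "[:b:]"] bw(1) deg by auto
  ultimately show ?thesis by blast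
qed

lemma irreducible_root_nonzero:
  fixes p :: "int poly" and z :: complex
  assumes irr: "irreducible p" and deg: "degree p \<ge> 2" and root: "poly (map_poly of_int p) z = 0"
  shows "z \<noteq> 0"
proof
  assume "z = 0"
  then have "poly p 0 = 0" using root by (simp add: poly_0_coeff_0 coeff_map_poly)
  then have "[:0,1:] dvd p" using poly_eq_0_iff_dvd[of p 0] by simp
  then obtain r where r: "p = [:0,1:] * r" by blast
  from irreducibleD[OF irr r] have "is_unit [:0::int,1:] \<or> is_unit r" .
  moreover have "\<not> is_unit [:0::int,1:]" by (auto simp: is_unit_poly_iff)
  moreover have "\<not> is_unit r"
  proof
    assume "is_unit r"
    then obtain c where "r = [:c:]" by (auto simp: is_unit_poly_iff)
    then have "degree p \<le> 1" using r by (simp add: degree_mult_le)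
    then show False using deg by simp
  qed
  ultimately show False by blast
qed

text \<open>Multiplying by a power of the variable turns a relation among integral powers of \<alpha> into a
  polynomial vanishing at \<alpha>, hence divisible by p and vanishing at every root of p.\<close>

lemma laurent_relation_conjugate:
  fixes p :: "int poly" and \<alpha> :: real and z :: complex and c :: "int \<Rightarrow> int"
  assumes irr: "irreducible p" and deg: "degree p \<ge> 2"
    and root: "poly (map_poly of_int p) (of_real \<alpha>) = (0::complex)"
    and conj: "poly (map_poly of_int p) z = 0"
    and fin: "finite J" and rel: "(\<Sum>j\<in>J. of_int (c j) * \<alpha> powi j) = 0"
  shows "(\<Sum>j\<in>J. of_int (c j) * z powi j) = 0"
proof -
  define N where "N = (\<Sum>j\<in>J. nat (- j))"
  have N: "0 \<le> j + int N" if "j \<in> J" for j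
  proof -
    have "nat (- j) \<le> N" unfolding N_def using fin that by (intro member_le_sum) auto
    then show ?thesis by linarith
  qed
  define q where "q = (\<Sum>j\<in>J. monom (c j) (nat (j + int N)))"
  have poly_q: "poly (map_poly of_int q) \<zeta> = \<zeta> ^ N * (\<Sum>j\<in>J. of_int (c j) * \<zeta> powi j)"
    if "\<zeta> \<noteq> 0" for \<zeta> :: complex
  proof -
    have pow: "\<zeta> ^ nat (j + int N) = \<zeta> ^ N * \<zeta> powi j" if "j \<in> J" for j
    proof -
      have "\<zeta> ^ nat (j + int N) = \<zeta> powi (j + int N)"
        using N[OF that] by (metis power_int_of_nat int_nat_eq)
      also have "\<dots> = \<zeta> ^ N * \<zeta> powi j" using \<open>\<zeta> \<noteq> 0\<close> by (simp add: power_int_add mult.commute)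
      finally show ?thesis .
    qed
    have "poly (map_poly of_int q) \<zeta> = (\<Sum>j\<in>J. of_int (c j) * \<zeta> ^ nat (j + int N))"
      unfolding q_def map_poly_of_int_sum by (simp add: poly_sum map_poly_monom poly_monom)
    also have "\<dots> = (\<Sum>j\<in>J. \<zeta> ^ N * (of_int (c j) * \<zeta> powi j))"
      by (rule sum.cong) (simp_all add: pow mult_ac)
    finally show ?thesis by (simp add: sum_distrib_left)
  qed
  have "(of_real \<alpha> :: complex) \<noteq> 0" using irreducible_root_nonzero[OF irr deg root] .
  moreover have "(\<Sum>j\<in>J. of_int (c j) * (of_real \<alpha> :: complex) powi j) = 0"
    using arg_cong[OF rel, of "of_real :: real \<Rightarrow> complex"] by (simp add: of_real_power_int)
  ultimately have "poly (map_poly of_int q) (of_real \<alpha>) = (0::complex)" using poly_q by simp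
  then have "p dvd q" using irreducible_dvd_if_common_root[OF irr _ root] deg by simp
  then obtain r where "q = p * r" by blast
  then have "poly (map_poly of_int q) z = 0" using conj by (simp add: map_poly_of_int_mult)
  moreover have "z \<noteq> 0" using irreducible_root_nonzero[OF irr deg conj] .
  ultimately show ?thesis using poly_q[of z] by simp
qed

lemma e1_int_combination:
  "finite J \<Longrightarrow> e1 (\<Sum>j\<in>J. of_int (c j) * w j) = (\<Prod>j\<in>J. e1 (w j) powi c j)"
  unfolding e1_def by (simp add: sum_distrib_left exp_sum exp_power_int mult_ac)

lemma e1_nonzero: "e1 z \<noteq> 0"
  unfolding e1_def by simp

lemma e1_add: "e1 (x + y) = e1 x * e1 y"
  unfolding e1_def by (simp add: distrib_left exp_add)

lemma theta_relation:
  fixes p :: "int poly" and \<alpha> :: real and alphas :: "nat \<Rightarrow> complex" and c :: "int \<Rightarrow> int"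
    and theta_S :: "(nat \<Rightarrow> complex) \<Rightarrow> int \<Rightarrow> complex"
  assumes irr: "irreducible p" and deg: "degree p \<ge> 2"
    and root: "poly (map_poly of_int p) (of_real \<alpha>) = (0::complex)"
    and conj_all: "alphas ` {1..d} = {z. poly (map_poly of_int p) z = 0}"
    and theta: "\<And>s j. theta_S s j = (\<Sum>k=1..d. s k * alphas k powi j)"
    and fin: "finite J" and rel: "(\<Sum>j\<in>J. of_int (c j) * \<alpha> powi j) = 0"
  shows "(\<Sum>j\<in>J. of_int (c j) * theta_S s j) = 0"
proof -
  have "(\<Sum>j\<in>J. of_int (c j) * theta_S s j) = (\<Sum>k=1..d. s k * (\<Sum>j\<in>J. of_int (c j) * alphas k powi j))"
    unfolding theta by (simp add: sum_distrib_left mult_ac sum.swap[of _ J])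
  also have "\<dots> = 0"
  proof (intro sum.neutral ballI)
    fix k assume "k \<in> {1..d}"
    then have "poly (map_poly of_int p) (alphas k) = 0" using conj_all by blast
    then show "s k * (\<Sum>j\<in>J. of_int (c j) * alphas k powi j) = 0"
      using laurent_relation_conjugate[OF irr deg root _ fin rel] by simp
  qed
  finally show ?thesis .
qed

lemma continuous_on_eq_on_closure:
  fixes P :: "'a::topological_space \<Rightarrow> 'b::t1_space"
  assumes U: "open U" "continuous_on U P" and x: "x \<in> closure T" "x \<in> U"
    and eq: "\<And>y. y \<in> T \<Longrightarrow> y \<in> U \<Longrightarrow> P y = c"
  shows "P x = c"
proof (rule ccontr)
  assume "P x \<noteq> c"
  have "open (P -` (- {c}) \<inter> U)"
    using U(2) unfolding continuous_on_open_vimage[OF U(1)] by (simp add: open_Compl)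
  moreover have "x \<in> (P -` (- {c}) \<inter> U) \<inter> closure T" using x \<open>P x \<noteq> c\<close> by simp
  ultimately have "(P -` (- {c}) \<inter> U) \<inter> T \<noteq> {}" using open_Int_closure_eq_empty by blast
  then show False using eq by auto
qed

lemma open_nonzero_coordinates: "finite J \<Longrightarrow> open {z :: 'i \<Rightarrow> 'a::real_normed_vector. \<forall>j\<in>J. z j \<noteq> 0}"
proof -
  assume "finite J"
  have "open {z :: 'i \<Rightarrow> 'a. z j \<noteq> 0}" for j
    by (intro open_Collect_neq continuous_on_product_coordinates continuous_on_const)
  moreover have "{z :: 'i \<Rightarrow> 'a. \<forall>j\<in>J. z j \<noteq> 0} = (\<Inter>j\<in>J. {z. z j \<noteq> 0})" by auto
  ultimately show ?thesis using \<open>finite J\<close> by auto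
qed

lemma continuous_on_prod_power_int:
  "continuous_on {z :: 'i \<Rightarrow> 'a::real_normed_field. \<forall>j\<in>J. z j \<noteq> 0} (\<lambda>z. \<Prod>j\<in>J. z j powi c j)"
proof (rule continuous_on_prod)
  show "continuous_on {z. \<forall>j\<in>J. z j \<noteq> 0} (\<lambda>z :: 'i \<Rightarrow> 'a. z j powi c j)" if "j \<in> J" for j
    by (rule continuous_on_power_int[OF continuous_on_subset[OF continuous_on_product_coordinates]])
       (use that in auto)
qed

text \<open>The map z \<mapsto> \<Prod>j z j ^ c j is continuous where all z j \<noteq> 0, which includes the torus,
  and it is 1 on the image of S, since every conjugate satisfies the relation too.\<close>

lemma e1_relation_on_closure:
  fixes p :: "int poly" and \<alpha> :: real and alphas :: "nat \<Rightarrow> complex" and c :: "int \<Rightarrow> int"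
    and theta_S :: "(nat \<Rightarrow> complex) \<Rightarrow> int \<Rightarrow> complex" and g :: "int \<Rightarrow> real"
  assumes irr: "irreducible p" and deg: "degree p \<ge> 2"
    and root: "poly (map_poly of_int p) (of_real \<alpha>) = (0::complex)"
    and conj_all: "alphas ` {1..d} = {z. poly (map_poly of_int p) z = 0}"
    and theta: "\<And>s j. theta_S s j = (\<Sum>k=1..d. s k * alphas k powi j)"
    and g: "(\<lambda>j. e1 (of_real (g j))) \<in> closure ((\<lambda>s j. e1 (theta_S s j)) ` S)"
    and fin: "finite J" and rel: "(\<Sum>j\<in>J. of_int (c j) * \<alpha> powi j) = 0"
  shows "e1 (of_real (\<Sum>j\<in>J. of_int (c j) * g j)) = 1"
proof -
  have "(\<Prod>j\<in>J. e1 (of_real (g j)) powi c j) = 1"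
  proof (rule continuous_on_eq_on_closure[OF open_nonzero_coordinates[OF fin]
                continuous_on_prod_power_int g])
    show "(\<lambda>j. e1 (of_real (g j))) \<in> {z. \<forall>j\<in>J. z j \<noteq> 0}" by (simp add: e1_nonzero)
    show "(\<Prod>j\<in>J. z j powi c j) = 1" if z: "z \<in> (\<lambda>s j. e1 (theta_S s j)) ` S" for z
    proof -
      obtain s where "z = (\<lambda>j. e1 (theta_S s j))" using z by blast
      then have "(\<Prod>j\<in>J. z j powi c j) = e1 (\<Sum>j\<in>J. of_int (c j) * theta_S s j)"
        by (simp add: e1_int_combination[OF fin])
      also have "\<dots> = 1"
        using theta_relation[OF irr deg root conj_all theta fin rel] by (simp add: e1_def)
      finally show ?thesis .
    qed
  qed
  then show ?thesis by (simp add: e1_int_combination[OF fin])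
qed

lemma exp_int_combination_eq_if_values_eq:
  fixes p :: "int poly" and \<alpha> :: real and alphas :: "nat \<Rightarrow> complex" and c c' :: "int \<Rightarrow> int"
    and theta_S :: "(nat \<Rightarrow> complex) \<Rightarrow> int \<Rightarrow> complex" and g :: "int \<Rightarrow> real"
  assumes irr: "irreducible p" and deg: "degree p \<ge> 2"
    and root: "poly (map_poly of_int p) (of_real \<alpha>) = (0::complex)"
    and conj_all: "alphas ` {1..d} = {z. poly (map_poly of_int p) z = 0}"
    and theta: "\<And>s j. theta_S s j = (\<Sum>k=1..d. s k * alphas k powi j)"
    and g: "(\<lambda>j. e1 (of_real (g j))) \<in> closure ((\<lambda>s j. e1 (theta_S s j)) ` S)"
    and fin: "finite {j. c j \<noteq> 0}" "finite {j. c' j \<noteq> 0}"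
    and eq: "(\<Sum>j\<in>{j. c j \<noteq> 0}. of_int (c j) * \<alpha> powi j) = (\<Sum>j\<in>{j. c' j \<noteq> 0}. of_int (c' j) * \<alpha> powi j)"
  shows "exp (- 2 * of_real pi * \<i> * of_real (\<Sum>j\<in>{j. c j \<noteq> 0}. of_int (c j) * g j)) =
         exp (- 2 * of_real pi * \<i> * of_real (\<Sum>j\<in>{j. c' j \<noteq> 0}. of_int (c' j) * g j))"
proof -
  define X where "X = (\<Sum>j\<in>{j. c j \<noteq> 0}. of_int (c j) * g j)"
  define X' where "X' = (\<Sum>j\<in>{j. c' j \<noteq> 0}. of_int (c' j) * g j)"
  define J where "J = {j. c j \<noteq> 0} \<union> {j. c' j \<noteq> 0}"
  have "finite J" unfolding J_def using fin by auto
  have extend: "(\<Sum>j\<in>{j. b j \<noteq> 0}. of_int (b j) * x j) = (\<Sum>j\<in>J. of_int (b j) * x j)"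
    if "b = c \<or> b = c'" for b and x :: "int \<Rightarrow> real"
    by (rule sum.mono_neutral_left[OF \<open>finite J\<close>]) (use that in \<open>auto simp: J_def\<close>)
  have "(\<Sum>j\<in>J. of_int (c j - c' j) * \<alpha> powi j) = 0"
    using eq extend[of c] extend[of c'] by (simp add: algebra_simps sum_subtractf)
  then have "e1 (of_real (\<Sum>j\<in>J. of_int (c j - c' j) * g j)) = 1"
    by (rule e1_relation_on_closure[OF irr deg root conj_all theta g \<open>finite J\<close>])
  moreover have "(\<Sum>j\<in>J. of_int (c j - c' j) * g j) = X - X'"
    unfolding X_def X'_def using extend[of c] extend[of c'] by (simp add: algebra_simps sum_subtractf)
  ultimately have "e1 (of_real (X - X')) = 1" by (simp only:)
  then have "e1 (of_real X) = e1 (of_real X')"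
    using e1_add[of "of_real (X - X')" "of_real X'"] by simp
  then have "exp (- 2 * of_real pi * \<i> * of_real X) = exp (- 2 * of_real pi * \<i> * of_real X')"
    unfolding e1_def by (simp add: exp_minus)
  then show ?thesis unfolding X_def X'_def .
qed

theorem theorem3p1:
  fixes \<alpha> :: real and p :: "int poly" and d :: nat
    and alphas :: "nat \<Rightarrow> complex"
    and a :: "nat \<Rightarrow> complex" and \<tau> :: "nat \<Rightarrow> real" and \<tau>k :: "nat \<Rightarrow> int \<Rightarrow> int"
    and S :: "(nat \<Rightarrow> complex) set" and theta_S :: "(nat \<Rightarrow> complex) \<Rightarrow> int \<Rightarrow> complex"
    and G :: "(int \<Rightarrow> real) set"
    and ahat :: "real \<Rightarrow> complex" and A :: "(int \<Rightarrow> real) \<Rightarrow> complex"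
  assumes monic: "lead_coeff p = 1"
    and irred: "irreducible p"
    and root: "poly (map_poly of_int p) (of_real \<alpha>) = (0::complex)"
    and deg: "degree p = d" and d2: "d \<ge> 2"
    and PV: "\<forall>z. poly (map_poly of_int p) z = 0 \<longrightarrow> z \<noteq> of_real \<alpha> \<longrightarrow> cmod z < 1"
    and conj1: "alphas 1 = of_real \<alpha>"
    and conj_inj: "inj_on alphas {1..d}"
    and conj_all: "alphas ` {1..d} = {z. poly (map_poly of_int p) z = 0}"
    and S_def: "S = {s. s 1 \<in> \<real> \<and> (\<forall>k. k \<notin> {1..d} \<longrightarrow> s k = 0) \<and>
                   (\<forall>j\<in>{1..d}. \<forall>k\<in>{1..d}. alphas j = cnj (alphas k) \<longrightarrow> s j = cnj (s k))}"
    and vartheta_def: "\<And>s j. theta_S s j = (\<Sum>k=1..d. s k * alphas k powi j)"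
    and G_def: "G = {g. (\<lambda>j. e1 (of_real (g j))) \<in> closure ((\<lambda>s j. e1 (theta_S s j)) ` S)}"
    and tau_fin: "\<And>k. finite {j. \<tau>k k j \<noteq> 0}"
    and tau_rep: "\<And>k. \<tau> k = (\<Sum>j\<in>{j. \<tau>k k j \<noteq> 0}. of_int (\<tau>k k j) * \<alpha> powi j)"
    and decay: "\<exists>\<eta>>0. summable (\<lambda>k. cmod (a k) * exp (\<eta> * \<bar>\<tau> k\<bar>))"
    and ahat_def: "\<And>y. ahat y = (1 / \<bar>\<alpha>\<bar>) * (\<Sum>k. a k * exp (- 2 * of_real pi * \<i> * of_real (\<tau> k * y)))"
    and A_def: "\<And>g. A g = (1 / \<bar>\<alpha>\<bar>) *
               (\<Sum>k. a k * exp (- 2 * of_real pi * \<i> * of_real (\<Sum>j\<in>{j. \<tau>k k j \<noteq> 0}. of_int (\<tau>k k j) * g j)))"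
    and A_nonzero: "\<exists>g\<in>G. A g \<noteq> 0"
  shows "upper_zero_density ahat < (top::ennreal)"
proof -
  obtain g where g: "g \<in> G" "A g \<noteq> 0" using A_nonzero by blast
  have \<alpha>: "\<alpha> \<noteq> 0"
  proof
    assume "\<alpha> = 0"
    then have "A g = 0" using A_def[of g] by simp
    with g(2) show False ..
  qed
  obtain \<eta> where "0 < \<eta>" "summable (\<lambda>k. cmod (a k) * exp (\<eta> * \<bar>\<tau> k\<bar>))" using decay by blast
  then interpret exp_decay a \<tau> \<eta> by unfold_locales
  define E where "E k = exp (- 2 * of_real pi * \<i> *
                     of_real (\<Sum>j\<in>{j. \<tau>k k j \<noteq> 0}. of_int (\<tau>k k j) * g j))" for k
  have "E k = E k'" if "\<tau> k = \<tau> k'" for k k'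
  proof -
    have "(\<Sum>j\<in>{j. \<tau>k k j \<noteq> 0}. of_int (\<tau>k k j) * \<alpha> powi j) =
          (\<Sum>j\<in>{j. \<tau>k k' j \<noteq> 0}. of_int (\<tau>k k' j) * \<alpha> powi j)"
      using that by (simp only: tau_rep[symmetric])
    then show ?thesis
      unfolding E_def using g(1) G_def d2 deg
      by (intro exp_int_combination_eq_if_values_eq[OF irred _ root conj_all vartheta_def _ tau_fin tau_fin])
         simp_all
  qed
  moreover have "cmod (E k) \<le> 1" for k unfolding E_def by (simp add: norm_exp_eq_Re)
  moreover have "(\<Sum>k. a k * E k) \<noteq> 0" using g(2) \<alpha> unfolding A_def E_def by simp
  ultimately obtain y0 where "twisted_series a \<tau> 0 (\<lambda>_. 1) y0 \<noteq> 0"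
    using twisted_series_not_identically_zero by blast
  then have "upper_zero_density (\<lambda>y. of_real (1 / \<bar>\<alpha>\<bar>) * twisted_series a \<tau> 0 (\<lambda>_. 1) y) < top"
    by (rule upper_zero_density_twisted_series_lt_top) (simp add: \<alpha>)
  moreover have "ahat = (\<lambda>y. of_real (1 / \<bar>\<alpha>\<bar>) * twisted_series a \<tau> 0 (\<lambda>_. 1) y)"
    by (rule ext) (simp add: ahat_def twisted_series_def phase_def)
  ultimately show ?thesis by simp
qed

end
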